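(* Let $\mathcal{Z}=\mathcal{Z}_G^{\mathcal{C}}\subset\mathrm{Sym}(p)$ be a cBC-space with respect to an ordered partition $(n_1,\dots,n_r)$ of $p$, let $i\in[r]$, $\alpha\in[d_i]$, and let $A\in\mathrm{Sym}^+(p)$. Let $\{B^{(i)}_1,\dots,B^{(i)}_{q_i}\}$ be a basis of $L_i(\mathcal{Z})$, set $U_t=B^{(i)}_tc^{(i)}_\alpha$ for $t\in[q_i]$, and let $G_{i,\alpha}\in\mathbb{R}^{q_i\times q_i}$ be the Gram matrix $(G_{i,\alpha})_{ts}=\operatorname{tr}(U_tU_s^\top)$. Then $m_{i,\alpha}=\operatorname{rank}G_{i,\alpha}$. Moreover, let $m=m_{i,\alpha}$, and if $m>0$ let $t_1,\dots,t_m\in[q_i]$ be indices such that the principal submatrix $\widetilde G_{i,\alpha}=((G_{i,\alpha})_{t_kt_l})_{k,l\in[m]}$ is nonsingular (e.g. the pivots of a Cholesky decomposition with complete pivoting). Put $U'_k=U_{t_k}$, $\Psi_{i,\alpha}(A)\in\mathbb{R}^{m\times m}$ with $(\Psi_{i,\alpha}(A))_{kl}=\operatorname{tr}(AU'_k(U'_l)^\top)$, $V_{i,\alpha}(A)\in\mathbb{R}^{1\times m}$ with $(V_{i,\alpha}(A))_{1k}=\mu_{i,\alpha}^{-1/2}\operatorname{tr}(Ac^{(i)}_\alpha(U'_k)^\top)$, and $\lambda_{i,\alpha}(A)=\mu_{i,\alpha}^{-1}\operatorname{tr}(Ac^{(i)}_\alpha)$. Then $\{U'_1,\dots,U'_m\}$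 is a basis of $\mathfrak{h}_{i,\alpha}$, $\Psi_{i,\alpha}(A)$ is positive definite, and $$\det\psi_{i,\alpha}(A)=\frac{\det\Psi_{i,\alpha}(A)}{\det\widetilde G_{i,\alpha}},\qquad \frac{\det\phi_{i,\alpha}(A)}{\det\psi_{i,\alpha}(A)}=\lambda_{i,\alpha}(A)-V_{i,\alpha}(A)\Psi_{i,\alpha}(A)^{-1}V_{i,\alpha}(A)^\top.$$ If $m=0$, then (with the convention $\det\psi_{i,\alpha}(A)=1$) $\det\phi_{i,\alpha}(A)/\det\psi_{i,\alpha}(A)=\lambda_{i,\alpha}(A)$.
   Context: Colored graph: $G=(V,E)$ finite simple undirected graph on $V=[p]$ with a coloring $\mathcal{C}$: vertex color classes $V_1,\dots,V_r$, edge color classes partitioning $E$; the extended edge set $\tilde E=E\cup\{\{v\}:v\in V\}$ is colored with loops $\{v\}$ colored by the color of $v$, and $c(v,w)$ denotes the color of $\{v,w\}\in\tilde E$. $\mathcal{Z}_G^{\mathcal{C}}$ is the space of $x\in\mathrm{Sym}(p)$ with $x_{ij}=0$ whenever $i\ne j$, $\{i,j\}\notin E$, and $x_{ij}=x_{kl}$ whenever $\{i,j\},\{k,l\}\in\tilde E$ have $c(i,j)=c(k,l)$. Block notation: for an ordered partition $(n_1,\dots,n_r)$ of $p$, $x\in\mathrm{Sym}(p)$ has blocks $X_{kh}\in\mathbb{R}^{n_k\times n_h}$; $\mathrm{BlockTri}(x)$ keeps blocks with $k\ge h$, $\mathrm{BlockDiag}(x)$ keeps only diagonal blocks. $M_i(\mathcal{Z})=\{x\in\mathcal{Z}: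 X_{kh}=0$ unless $(k,h)=(i,i)\}$, $L_i(\mathcal{Z})=\{x\in\mathcal{Z}: X_{kh}=0$ unless $k>h=i$ or $h>k=i\}$. $\mathcal{Z}$ is a cBC-space if (Z0) $I_p\in\mathcal{Z}$ and $\mathcal{Z}=(\bigoplus_{i\in[r]}M_i(\mathcal{Z}))\oplus(\bigoplus_{i\in[r-1]}L_i(\mathcal{Z}))$; (Z1) $\mathrm{BlockTri}(x)\mathrm{BlockTri}(x)^\top\in\mathcal{Z}$ for all $x\in\mathcal{Z}$; (Z2) $\mathrm{BlockDiag}(x)\mathrm{BlockDiag}(y)\in\mathcal{Z}$ for all $x,y\in\mathcal{Z}$. Structure data: $e^{(i)}$ is the $p\times p$ matrix with $(i,i)$ block $I_{n_i}$ and others $0$; $\{c^{(i)}_\alpha\}_{\alpha\in[d_i]}$ is a Jordan frame of $M_i(\mathcal{Z})$ (a maximal family of nonzero mutually orthogonal idempotents $c^{(i)}_\alpha c^{(i)}_\beta=\delta_{\alpha\beta}c^{(i)}_\alpha$ in $M_i(\mathcal{Z})$ summing to $e^{(i)}$). $\mu_{i,\alpha}=\operatorname{rank}c^{(i)}_\alpha$, $\tilde e^{(i)}_\alpha=c^{(i)}_\alpha/\sqrt{\mu_{i,\alpha}}$, $c^{(i)}_{>\alpha}=\sum_{\beta>\alpha}c^{(i)}_\beta$, $\mathfrak{h}_{i,\alpha}=c^{(i)}_{>\alpha}M_i(\mathcal{Z})c^{(i)}_\alpha\oplus L_i(\mathcal{Z})c^{(i)}_\alpha$, with an orthonormal basis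 $\{\tilde f^{(i)}_\gamma\}_{\gamma\in J_{i,\alpha}}$ for $\langle X,Y\rangle=\operatorname{tr}(XY^\top)$, and $m_{i,\alpha}=\dim\mathfrak{h}_{i,\alpha}$. For $A\in\mathrm{Sym}(p)$ with $m_{i,\alpha}>0$: $\psi_{i,\alpha}(A)$ is the $m_{i,\alpha}\times m_{i,\alpha}$ matrix with entries $\operatorname{tr}(A\tilde f^{(i)}_\gamma(\tilde f^{(i)}_{\gamma'})^\top)$, $v_{i,\alpha}(A)$ the row vector with entries $\operatorname{tr}(A\tilde e^{(i)}_\alpha(\tilde f^{(i)}_\gamma)^\top)$, and $\phi_{i,\alpha}(A)=\begin{bmatrix}\operatorname{tr}(A\tilde e^{(i)}_\alpha\tilde e^{(i)}_\alpha)&v_{i,\alpha}(A)\\ v_{i,\alpha}(A)^\top&\psi_{i,\alpha}(A)\end{bmatrix}$; if $m_{i,\alpha}=0$, $\phi_{i,\alpha}(A)=\operatorname{tr}(A\tilde e^{(i)}_\alpha\tilde e^{(i)}_\alpha)$. *)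

theory Defs
  imports "Jordan_Normal_Form.Determinant" "Jordan_Normal_Form.DL_Rank"
          "Jordan_Normal_Form.Gauss_Jordan_Elimination"
begin

(* All indices are 0-based: vertices/coordinates a < p, blocks k < r = length ns,
   Jordan-frame indices alpha < d. *)

definition mtrace :: "real mat \<Rightarrow> real" where
  "mtrace A = (\<Sum>a<dim_row A. A $$ (a,a))"

definition sym_mat :: "nat \<Rightarrow> real mat \<Rightarrow> bool" where
  "sym_mat p x \<longleftrightarrow> x \<in> carrier_mat p p \<and> transpose_mat x = x"

definition posdef_mat :: "nat \<Rightarrow> real mat \<Rightarrow> bool" where
  "posdef_mat p A \<longleftrightarrow> sym_mat p A \<and>
     (\<forall>v \<in> carrier_vec p. v \<noteq> 0\<^sub>v p \<longrightarrow> 0 < v \<bullet> (A *\<^sub>v v))"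

definition simple_graph_on :: "nat \<Rightarrow> nat set set \<Rightarrow> bool" where
  "simple_graph_on p E \<longleftrightarrow> (\<forall>e\<in>E. \<exists>a b. a < p \<and> b < p \<and> a \<noteq> b \<and> e = {a,b})"

definition ext_edges :: "nat \<Rightarrow> nat set set \<Rightarrow> nat set set" where
  "ext_edges p E = E \<union> {{v} | v. v < p}"

(* Z_G^C ; colr gives the colour of each extended edge (loops {v} carry vertex colours) *)
definition ZGC :: "nat \<Rightarrow> nat set set \<Rightarrow> (nat set \<Rightarrow> 'c) \<Rightarrow> real mat set" where
  "ZGC p E colr = {x. sym_mat p x \<and>
     (\<forall>a<p. \<forall>b<p. a \<noteq> b \<and> {a,b} \<notin> E \<longrightarrow> x $$ (a,b) = 0) \<and>
     (\<forall>a<p. \<forall>b<p. \<forall>c<p. \<forall>e<p. {a,b} \<in> ext_edges p E \<and> {c,e} \<in> ext_edges p E \<and>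
         colr {a,b} = colr {c,e} \<longrightarrow> x $$ (a,b) = x $$ (c,e))}"

definition ordered_partition :: "nat \<Rightarrow> nat list \<Rightarrow> bool" where
  "ordered_partition p ns \<longleftrightarrow> (\<forall>k\<in>set ns. 0 < k) \<and> sum_list ns = p"

definition blk :: "nat list \<Rightarrow> nat \<Rightarrow> nat" where
  "blk ns a = (LEAST k. a < sum_list (take (Suc k) ns))"

definition block_tri :: "nat list \<Rightarrow> real mat \<Rightarrow> real mat" where
  "block_tri ns x = mat (sum_list ns) (sum_list ns)
     (\<lambda>(a,b). if blk ns b \<le> blk ns a then x $$ (a,b) else 0)"

definition block_diag :: "nat list \<Rightarrow> real mat \<Rightarrow> real mat" where
  "block_diag ns x = mat (sum_list ns) (sum_list ns)
     (\<lambda>(a,b). if blk ns b = blk ns a then x $$ (a,b) else 0)"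

definition Mspace :: "nat list \<Rightarrow> nat \<Rightarrow> real mat set \<Rightarrow> real mat set" where
  "Mspace ns i Z = {x \<in> Z. \<forall>a<sum_list ns. \<forall>b<sum_list ns.
      \<not> (blk ns a = i \<and> blk ns b = i) \<longrightarrow> x $$ (a,b) = 0}"

definition Lspace :: "nat list \<Rightarrow> nat \<Rightarrow> real mat set \<Rightarrow> real mat set" where
  "Lspace ns i Z = {x \<in> Z. \<forall>a<sum_list ns. \<forall>b<sum_list ns.
      \<not> ((blk ns b < blk ns a \<and> blk ns b = i) \<or> (blk ns a < blk ns b \<and> blk ns a = i))
      \<longrightarrow> x $$ (a,b) = 0}"

definition msum :: "nat \<Rightarrow> (nat \<Rightarrow> real mat) \<Rightarrow> nat set \<Rightarrow> real mat" where
  "msum p F S = mat p p (\<lambda>(a,b). \<Sum>k\<in>S. F k $$ (a,b))"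

definition cBC_space :: "nat list \<Rightarrow> real mat set \<Rightarrow> bool" where
  "cBC_space ns Z \<longleftrightarrow>
    (let p = sum_list ns; r = length ns in
      \<comment> \<open>(Z0)\<close>
      1\<^sub>m p \<in> Z \<and>
      Z = {x. \<exists>mf lf. (\<forall>k<r. mf k \<in> Mspace ns k Z) \<and> (\<forall>k<r - 1. lf k \<in> Lspace ns k Z) \<and>
                x = mat p p (\<lambda>(a,b). (\<Sum>k<r. mf k $$ (a,b)) + (\<Sum>k<r - 1. lf k $$ (a,b)))} \<and>
      (\<forall>mf lf mf' lf'. (\<forall>k<r. mf k \<in> Mspace ns k Z \<and> mf' k \<in> Mspace ns k Z) \<and>
          (\<forall>k<r - 1. lf k \<in> Lspace ns k Z \<and> lf' k \<in> Lspace ns k Z) \<and>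
          mat p p (\<lambda>(a,b). (\<Sum>k<r. mf k $$ (a,b)) + (\<Sum>k<r - 1. lf k $$ (a,b))) =
          mat p p (\<lambda>(a,b). (\<Sum>k<r. mf' k $$ (a,b)) + (\<Sum>k<r - 1. lf' k $$ (a,b)))
          \<longrightarrow> (\<forall>k<r. mf k = mf' k) \<and> (\<forall>k<r - 1. lf k = lf' k)) \<and>
      \<comment> \<open>(Z1)\<close>
      (\<forall>x\<in>Z. block_tri ns x * transpose_mat (block_tri ns x) \<in> Z) \<and>
      \<comment> \<open>(Z2)\<close>
      (\<forall>x\<in>Z. \<forall>y\<in>Z. block_diag ns x * block_diag ns y \<in> Z))"

definition e_blk :: "nat list \<Rightarrow> nat \<Rightarrow> real mat" where
  "e_blk ns i = mat (sum_list ns) (sum_list ns) (\<lambda>(a,b). if a = b \<and> blk ns a = i then 1 else 0)"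

definition orth_idem_family :: "nat \<Rightarrow> real mat set \<Rightarrow> (nat \<Rightarrow> real mat) \<Rightarrow> nat \<Rightarrow> bool" where
  "orth_idem_family p Mi cs d \<longleftrightarrow>
     (\<forall>\<alpha><d. cs \<alpha> \<in> Mi \<and> cs \<alpha> \<noteq> 0\<^sub>m p p) \<and>
     (\<forall>\<alpha><d. \<forall>\<beta><d. cs \<alpha> * cs \<beta> = (if \<alpha> = \<beta> then cs \<alpha> else 0\<^sub>m p p))"

definition jordan_frame :: "nat list \<Rightarrow> nat \<Rightarrow> real mat set \<Rightarrow> (nat \<Rightarrow> real mat) \<Rightarrow> nat \<Rightarrow> bool" where
  "jordan_frame ns i Z cs d \<longleftrightarrow>
     orth_idem_family (sum_list ns) (Mspace ns i Z) cs d \<and>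
     msum (sum_list ns) cs {..<d} = e_blk ns i \<and>
     (\<forall>cs' d'. orth_idem_family (sum_list ns) (Mspace ns i Z) cs' d' \<longrightarrow> d' \<le> d)"

definition mat_rank :: "nat \<Rightarrow> real mat \<Rightarrow> nat" where
  "mat_rank n A = vec_space.rank n A"

definition hspace :: "nat list \<Rightarrow> nat \<Rightarrow> real mat set \<Rightarrow> (nat \<Rightarrow> real mat) \<Rightarrow> nat \<Rightarrow> nat \<Rightarrow> real mat set" where
  "hspace ns i Z cs d \<alpha> = {msum (sum_list ns) cs {\<alpha><..<d} * x * cs \<alpha> + y * cs \<alpha> | x y.
      x \<in> Mspace ns i Z \<and> y \<in> Lspace ns i Z}"

definition mat_lincomb :: "nat \<Rightarrow> (nat \<Rightarrow> real) \<Rightarrow> real mat list \<Rightarrow> real mat" where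
  "mat_lincomb p c Us = mat p p (\<lambda>(a,b). \<Sum>k<length Us. c k * Us ! k $$ (a,b))"

definition mats_lin_indep :: "nat \<Rightarrow> real mat list \<Rightarrow> bool" where
  "mats_lin_indep p Us \<longleftrightarrow> (\<forall>c. mat_lincomb p c Us = 0\<^sub>m p p \<longrightarrow> (\<forall>k<length Us. c k = 0))"

definition mats_span :: "nat \<Rightarrow> real mat list \<Rightarrow> real mat set" where
  "mats_span p Us = {mat_lincomb p c Us | c. True}"

definition is_mat_basis :: "nat \<Rightarrow> real mat set \<Rightarrow> real mat list \<Rightarrow> bool" where
  "is_mat_basis p S Us \<longleftrightarrow> set Us \<subseteq> carrier_mat p p \<and> mats_lin_indep p Us \<and> mats_span p Us = S"

definition mat_dim :: "nat \<Rightarrow> real mat set \<Rightarrow> nat" where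
  "mat_dim p S = (THE n. \<exists>Us. is_mat_basis p S Us \<and> length Us = n)"

definition orthonormal_mats :: "real mat list \<Rightarrow> bool" where
  "orthonormal_mats fs \<longleftrightarrow> (\<forall>g<length fs. \<forall>g'<length fs.
      mtrace (fs ! g * transpose_mat (fs ! g')) = (if g = g' then 1 else 0))"

definition gram_mat :: "real mat list \<Rightarrow> real mat" where
  "gram_mat Us = mat (length Us) (length Us) (\<lambda>(t,s). mtrace (Us ! t * transpose_mat (Us ! s)))"

(* (tr(A F_k F_l^T))_{k,l}; gives psi_{i,alpha}(A) for the orthonormal basis and Psi_{i,alpha}(A) for U' *)
definition psi_mat :: "real mat \<Rightarrow> real mat list \<Rightarrow> real mat" where
  "psi_mat A Fs = mat (length Fs) (length Fs) (\<lambda>(k,l). mtrace (A * Fs ! k * transpose_mat (Fs ! l)))"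

(* phi_{i,alpha}(A) with et = tilde e^{(i)}_alpha and fs the orthonormal basis of h_{i,alpha};
   for fs = [] it is the 1x1 matrix tr(A et et) *)
definition phi_mat :: "real mat \<Rightarrow> real mat \<Rightarrow> real mat list \<Rightarrow> real mat" where
  "phi_mat A et fs = mat (Suc (length fs)) (Suc (length fs)) (\<lambda>(a,b).
      if a = 0 \<and> b = 0 then mtrace (A * et * et)
      else if a = 0 then mtrace (A * et * transpose_mat (fs ! (b - 1)))
      else if b = 0 then mtrace (A * et * transpose_mat (fs ! (a - 1)))
      else mtrace (A * fs ! (a - 1) * transpose_mat (fs ! (b - 1))))"

end

theory Submission
  imports Defs "Jordan_Normal_Form.DL_Rank_Submatrix"
begin

(* For positive definite A the form <X,Y>_A = tr(A X Y^T) is an inner product on p x p matrices,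
   and psi(A), Psi(A) and G are its Gram matrices (for A and for the identity) on lists spanning
   h_{i,alpha}. Since M_i(Z) is commutative by (Z2), c_{>alpha} M_i(Z) c_alpha = 0, so h_{i,alpha}
   is spanned by the U_t = B_t c_alpha. If T holds the coordinates of the U_t in the orthonormal
   basis f, then G = T T^T, hence rank G = dim h_{i,alpha}. For pivots with a nonsingular principal
   minor the U'_k form a basis with square coordinate matrix T', and Psi(A) = T' psi(A) T'^T,
   G~ = T' T'^T give the determinant quotient. Finally psi(A) is the lower right block of phi(A),
   so det phi(A) / det psi(A) is a Schur complement, and V = v T'^T shows that it may be computed
   from the U'_k instead of f. *)

section \<open>Linear combinations of matrices\<close>

lemma mat_lincomb_index:
  "a < p \<Longrightarrow> b < p \<Longrightarrow> mat_lincomb p w Us $$ (a,b) = (\<Sum>k<length Us. w k * Us ! k $$ (a,b))"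
  unfolding mat_lincomb_def by simp

lemma mat_lincomb_carrier [simp]: "mat_lincomb p w Us \<in> carrier_mat p p"
  unfolding mat_lincomb_def by simp

lemma mat_lincomb_dims [simp]: "dim_row (mat_lincomb p w Us) = p" "dim_col (mat_lincomb p w Us) = p"
  unfolding mat_lincomb_def by simp_all

lemma mat_lincomb_cong:
  "(\<And>k. k < length Fs \<Longrightarrow> w k = w' k) \<Longrightarrow> mat_lincomb p w Fs = mat_lincomb p w' Fs"
  unfolding mat_lincomb_def by (intro cong_mat refl) auto

lemma nth_in_mats_span:
  assumes "k < length Xs" "Xs ! k \<in> carrier_mat p p"
  shows "Xs ! k \<in> mats_span p Xs"
proof -
  have "(\<Sum>j<length Xs. (if j = k then 1 else 0) * Xs ! j $$ (a,b)) = Xs ! k $$ (a,b)" for a b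
    using assms(1) by (subst sum.remove[of _ k]) auto
  then have "mat_lincomb p (\<lambda>j. if j = k then 1 else 0) Xs = Xs ! k"
    using assms(2) by (intro eq_matI) (auto simp: mat_lincomb_index)
  then show ?thesis unfolding mats_span_def by (metis (mono_tags, lifting) mem_Collect_eq)
qed

lemma set_subset_mats_span: "set Xs \<subseteq> carrier_mat p p \<Longrightarrow> set Xs \<subseteq> mats_span p Xs"
  using nth_mem by (fastforce simp: in_set_conv_nth intro!: nth_in_mats_span)

lemma mats_span_carrier: "X \<in> mats_span p Xs \<Longrightarrow> X \<in> carrier_mat p p"
  unfolding mats_span_def by auto

lemma mat_lincomb_lincomb:
  assumes "\<And>j. j < length Ys \<Longrightarrow> Ys ! j = mat_lincomb p (T j) Zs"
  shows "mat_lincomb p w Ys = mat_lincomb p (\<lambda>k. \<Sum>j<length Ys. w j * T j k) Zs"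
proof (rule eq_matI)
  fix a b assume "a < dim_row (mat_lincomb p (\<lambda>k. \<Sum>j<length Ys. w j * T j k) Zs)"
    "b < dim_col (mat_lincomb p (\<lambda>k. \<Sum>j<length Ys. w j * T j k) Zs)"
  then have ab: "a < p" "b < p" by auto
  have "mat_lincomb p w Ys $$ (a,b) =
      (\<Sum>j<length Ys. \<Sum>k<length Zs. w j * T j k * Zs ! k $$ (a,b))"
    using ab assms by (simp add: mat_lincomb_index sum_distrib_left mult.assoc)
  also have "\<dots> = (\<Sum>k<length Zs. (\<Sum>j<length Ys. w j * T j k) * Zs ! k $$ (a,b))"
    by (subst sum.swap) (simp add: sum_distrib_right)
  also have "\<dots> = mat_lincomb p (\<lambda>k. \<Sum>j<length Ys. w j * T j k) Zs $$ (a,b)"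
    using ab by (simp add: mat_lincomb_index)
  finally show "mat_lincomb p w Ys $$ (a,b) =
    mat_lincomb p (\<lambda>k. \<Sum>j<length Ys. w j * T j k) Zs $$ (a,b)" .
qed auto

lemma mats_span_coeffs:
  assumes "set Ys \<subseteq> mats_span p Zs"
  obtains T where "\<And>j. j < length Ys \<Longrightarrow> Ys ! j = mat_lincomb p (T j) Zs"
proof -
  have "\<forall>j. \<exists>T. j < length Ys \<longrightarrow> Ys ! j = mat_lincomb p T Zs"
    using assms unfolding mats_span_def by (auto simp: subset_iff)
  then show ?thesis using that by metis
qed

lemma mats_span_subset_mats_span:
  assumes "set Ys \<subseteq> mats_span p Zs"
  shows "mats_span p Ys \<subseteq> mats_span p Zs"
proof
  fix X assume "X \<in> mats_span p Ys"
  then obtain w where X: "X = mat_lincomb p w Ys" unfolding mats_span_def by auto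
  obtain T where "\<And>j. j < length Ys \<Longrightarrow> Ys ! j = mat_lincomb p (T j) Zs"
    using mats_span_coeffs[OF assms] by blast
  then show "X \<in> mats_span p Zs"
    using mat_lincomb_lincomb[of Ys p _ Zs w] unfolding X mats_span_def by auto
qed

lemma mat_lincomb_mult_right:
  assumes "set Bs \<subseteq> carrier_mat p p" "C \<in> carrier_mat p p"
  shows "mat_lincomb p w Bs * C = mat_lincomb p w (map (\<lambda>B. B * C) Bs)"
proof (rule eq_matI)
  fix a b assume "a < dim_row (mat_lincomb p w (map (\<lambda>B. B * C) Bs))"
    "b < dim_col (mat_lincomb p w (map (\<lambda>B. B * C) Bs))"
  then have ab: "a < p" "b < p" by auto
  have Bk: "Bs ! k \<in> carrier_mat p p" if "k < length Bs" for k using assms(1) that by auto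
  have "(mat_lincomb p w Bs * C) $$ (a,b) =
      (\<Sum>k<length Bs. w k * (\<Sum>e<p. Bs ! k $$ (a,e) * C $$ (e,b)))"
    using ab assms(2)
    by (simp add: scalar_prod_def atLeast0LessThan mat_lincomb_index sum_distrib_right
        sum_distrib_left sum.swap[where A="{..<p}"] mult.assoc)
  also have "\<dots> = (\<Sum>k<length Bs. w k * (Bs ! k * C) $$ (a,b))"
  proof (rule sum.cong[OF refl])
    fix k assume "k \<in> {..<length Bs}"
    then show "w k * (\<Sum>e<p. Bs ! k $$ (a,e) * C $$ (e,b)) = w k * (Bs ! k * C) $$ (a,b)"
      using ab assms(2) Bk[of k] by (simp add: scalar_prod_def atLeast0LessThan)
  qed
  also have "\<dots> = mat_lincomb p w (map (\<lambda>B. B * C) Bs) $$ (a,b)"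
    using ab by (simp add: mat_lincomb_index)
  finally show "(mat_lincomb p w Bs * C) $$ (a,b) = mat_lincomb p w (map (\<lambda>B. B * C) Bs) $$ (a,b)" .
qed (use assms(2) in auto)

lemma mats_lin_indep_append:
  assumes ind: "mats_lin_indep p Xs" and X: "X \<in> carrier_mat p p" and nsp: "X \<notin> mats_span p Xs"
  shows "mats_lin_indep p (Xs @ [X])"
  unfolding mats_lin_indep_def
proof (rule allI, rule impI)
  fix w assume w0: "mat_lincomb p w (Xs @ [X]) = 0\<^sub>m p p"
  let ?n = "length Xs"
  have E: "(\<Sum>k<?n. w k * Xs ! k $$ (a,b)) + w ?n * X $$ (a,b) = 0" if "a < p" "b < p" for a b
    using arg_cong[OF w0, of "\<lambda>M. M $$ (a,b)"] that by (simp add: mat_lincomb_index nth_append)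
  have wn: "w ?n = 0"
  proof (rule ccontr)
    assume wn: "w ?n \<noteq> 0"
    have "X = mat_lincomb p (\<lambda>k. - w k / w ?n) Xs"
    proof (rule eq_matI)
      fix a b assume "a < dim_row (mat_lincomb p (\<lambda>k. - w k / w ?n) Xs)"
        "b < dim_col (mat_lincomb p (\<lambda>k. - w k / w ?n) Xs)"
      then have ab: "a < p" "b < p" by auto
      have "X $$ (a,b) = - (\<Sum>k<?n. w k * Xs ! k $$ (a,b)) / w ?n"
        using E[OF ab] wn by (simp add: field_simps add_eq_0_iff)
      also have "\<dots> = (\<Sum>k<?n. (- w k / w ?n) * Xs ! k $$ (a,b))"
        by (simp add: sum_divide_distrib sum_negf)
      finally show "X $$ (a,b) = mat_lincomb p (\<lambda>k. - w k / w ?n) Xs $$ (a,b)"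
        using ab by (simp add: mat_lincomb_index)
    qed (use X in auto)
    then show False using nsp unfolding mats_span_def by auto
  qed
  have "mat_lincomb p w Xs = 0\<^sub>m p p"
    using E wn by (intro eq_matI) (auto simp: mat_lincomb_index)
  then have "\<forall>k<?n. w k = 0" using ind unfolding mats_lin_indep_def by blast
  then show "\<forall>k<length (Xs @ [X]). w k = 0" using wn by (auto simp: less_Suc_eq)
qed

lemma underdetermined_system_nontrivial_solution:
  fixes T :: "nat \<Rightarrow> nat \<Rightarrow> real"
  assumes "b < a"
  obtains v where "v \<in> carrier_vec a" "v \<noteq> 0\<^sub>v a" "\<And>j. j < b \<Longrightarrow> (\<Sum>i<a. T i j * v $ i) = 0"
proof -
  define M where "M = mat\<^sub>r a a (\<lambda>j. if j = a - 1 then 0\<^sub>v a else vec a (\<lambda>i. T i j))"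
  have M: "M \<in> carrier_mat a a" unfolding M_def by auto
  have "det M = 0" unfolding M_def
    by (rule det_row_0) (use assms in auto)
  then obtain v where v: "v \<in> carrier_vec a" "v \<noteq> 0\<^sub>v a" "M *\<^sub>v v = 0\<^sub>v a"
    using det_0_iff_vec_prod_zero_field[OF M] by blast
  have "(\<Sum>i<a. T i j * v $ i) = 0" if j: "j < b" for j
  proof -
    have "(M *\<^sub>v v) $ j = 0" using v(3) j assms by simp
    moreover have "(M *\<^sub>v v) $ j = (\<Sum>i<a. T i j * v $ i)"
      using j assms v(1) unfolding M_def by (simp add: scalar_prod_def atLeast0LessThan)
    ultimately show ?thesis by simp
  qed
  then show ?thesis using that v(1,2) by blast
qed

lemma mats_lin_indep_length_le:
  assumes ind: "mats_lin_indep p Xs" and sp: "set Xs \<subseteq> mats_span p Ys"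
  shows "length Xs \<le> length Ys"
proof (rule ccontr)
  assume "\<not> ?thesis"
  then have lt: "length Ys < length Xs" by simp
  obtain T where T: "\<And>i. i < length Xs \<Longrightarrow> Xs ! i = mat_lincomb p (T i) Ys"
    using mats_span_coeffs[OF sp] by blast
  obtain v where v: "v \<in> carrier_vec (length Xs)" "v \<noteq> 0\<^sub>v (length Xs)"
    "\<And>j. j < length Ys \<Longrightarrow> (\<Sum>i<length Xs. T i j * v $ i) = 0"
    using underdetermined_system_nontrivial_solution[OF lt] by blast
  have "mat_lincomb p (\<lambda>i. v $ i) Xs = mat_lincomb p (\<lambda>k. \<Sum>j<length Xs. v $ j * T j k) Ys"
    by (rule mat_lincomb_lincomb[OF T])
  also have "\<dots> = 0\<^sub>m p p"
    unfolding mat_lincomb_def using v(3) by (intro eq_matI) (auto simp: mult.commute)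
  finally have "\<forall>i<length Xs. v $ i = 0" using ind unfolding mats_lin_indep_def by blast
  then show False using v(1,2) by (auto intro!: eq_vecI)
qed

lemma is_mat_basis_length_eq:
  assumes "is_mat_basis p S Us" "is_mat_basis p S Ws"
  shows "length Us = length Ws"
proof -
  have "set Us \<subseteq> mats_span p Ws" "set Ws \<subseteq> mats_span p Us"
    using assms set_subset_mats_span[of Us p] set_subset_mats_span[of Ws p]
    unfolding is_mat_basis_def by auto
  then show ?thesis
    using mats_lin_indep_length_le assms unfolding is_mat_basis_def by (meson le_antisym)
qed

lemma mat_dim_eq:
  assumes "is_mat_basis p S Us"
  shows "mat_dim p S = length Us"
  unfolding mat_dim_def
proof (rule the_equality)
  show "\<exists>Ws. is_mat_basis p S Ws \<and> length Ws = length Us" using assms by blast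
  show "n = length Us" if "\<exists>Ws. is_mat_basis p S Ws \<and> length Ws = n" for n
    using that is_mat_basis_length_eq[OF assms] by auto
qed

lemma mats_span_eq_if_lin_indep_length_eq:
  assumes Y: "set Ys \<subseteq> carrier_mat p p" "mats_lin_indep p Ys"
    and X: "mats_lin_indep p Xs" "set Xs \<subseteq> mats_span p Ys" and len: "length Xs = length Ys"
  shows "mats_span p Xs = mats_span p Ys"
proof
  show "mats_span p Xs \<subseteq> mats_span p Ys" by (rule mats_span_subset_mats_span[OF X(2)])
  show "mats_span p Ys \<subseteq> mats_span p Xs"
  proof
    fix Z assume Z: "Z \<in> mats_span p Ys"
    show "Z \<in> mats_span p Xs"
    proof (rule ccontr)
      assume "Z \<notin> mats_span p Xs"
      then have "mats_lin_indep p (Xs @ [Z])"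
        by (rule mats_lin_indep_append[OF X(1) mats_span_carrier[OF Z]])
      moreover have "set (Xs @ [Z]) \<subseteq> mats_span p Ys" using X(2) Z by auto
      ultimately have "length (Xs @ [Z]) \<le> length Ys" by (rule mats_lin_indep_length_le)
      then show False using len by simp
    qed
  qed
qed

lemma nths_insert_length: "nths xs (insert (length xs) I) = nths xs I"
  unfolding nths_def by (intro arg_cong[where f = "map fst"] filter_cong) (auto simp: set_zip)

lemma exists_lin_indep_nths_spanning:
  assumes "set Us \<subseteq> carrier_mat p p"
  shows "\<exists>I \<subseteq> {..<length Us}. mats_lin_indep p (nths Us I) \<and> set Us \<subseteq> mats_span p (nths Us I)"
  using assms
proof (induction Us rule: rev_induct)
  case Nil
  have "mats_lin_indep p []" unfolding mats_lin_indep_def by simp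
  then show ?case by auto
next
  case (snoc X Us)
  then obtain I where I: "I \<subseteq> {..<length Us}" "mats_lin_indep p (nths Us I)"
    "set Us \<subseteq> mats_span p (nths Us I)" by auto
  let ?W = "nths Us I"
  have X: "X \<in> carrier_mat p p" using snoc.prems by simp
  have W: "set ?W \<subseteq> carrier_mat p p" using snoc.prems by (auto dest: in_set_nthsD)
  show ?case
  proof (cases "X \<in> mats_span p ?W")
    case True
    have "nths (Us @ [X]) I = ?W" using I(1) by (auto simp: nths_append)
    then show ?thesis using I True by (intro exI[of _ I]) auto
  next
    case False
    let ?J = "insert (length Us) I"
    have nths_J: "nths (Us @ [X]) ?J = ?W @ [X]" by (simp add: nths_append nths_insert_length)
    have "mats_span p ?W \<subseteq> mats_span p (?W @ [X])"
      using set_subset_mats_span[of "?W @ [X]" p] W X by (intro mats_span_subset_mats_span) auto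
    moreover have "X \<in> mats_span p (?W @ [X])"
      using set_subset_mats_span[of "?W @ [X]" p] W X by auto
    ultimately have "set (Us @ [X]) \<subseteq> mats_span p (?W @ [X])" using I(3) by auto
    moreover have "mats_lin_indep p (?W @ [X])" by (rule mats_lin_indep_append[OF I(2) X False])
    ultimately show ?thesis using I(1) nths_J by (intro exI[of _ ?J]) auto
  qed
qed

section \<open>The trace form of a positive definite matrix\<close>

lemma exists_nonzero_entry_vec:
  assumes "v \<in> carrier_vec n" "v \<noteq> 0\<^sub>v n"
  obtains i where "i < n" "v $ i \<noteq> 0"
proof -
  have "\<not> (\<forall>i<n. v $ i = 0)"
    using assms by (auto intro!: eq_vecI)
  then show ?thesis using that by blast
qed

lemma exists_nonzero_entry_mat:
  assumes "X \<in> carrier_mat p q" "X \<noteq> 0\<^sub>m p q"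
  obtains a b where "a < p" "b < q" "X $$ (a,b) \<noteq> 0"
proof -
  have "\<not> (\<forall>a<p. \<forall>b<q. X $$ (a,b) = 0)"
    using assms by (auto intro!: eq_matI)
  then show ?thesis using that by blast
qed

lemma posdef_matD:
  assumes "posdef_mat p A"
  shows "A \<in> carrier_mat p p" "transpose_mat A = A"
    "\<And>v. v \<in> carrier_vec p \<Longrightarrow> v \<noteq> 0\<^sub>v p \<Longrightarrow> 0 < v \<bullet> (A *\<^sub>v v)"
  using assms unfolding posdef_mat_def sym_mat_def by auto

lemma posdef_mat_quadratic_form_nonneg:
  assumes "posdef_mat p A" "v \<in> carrier_vec p"
  shows "0 \<le> v \<bullet> (A *\<^sub>v v)"
  using assms posdef_matD[OF assms(1)] by (cases "v = 0\<^sub>v p") (auto intro: less_imp_le)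

lemma posdef_mat_one: "posdef_mat p (1\<^sub>m p)"
proof -
  have "0 < v \<bullet> v" if v: "v \<in> carrier_vec p" "v \<noteq> 0\<^sub>v p" for v :: "real vec"
  proof -
    obtain i where i: "i < p" "v $ i \<noteq> 0" using exists_nonzero_entry_vec[OF v] .
    have "0 < (\<Sum>j\<in>{0..<p}. v $ j * v $ j)"
      by (rule sum_pos2[of _ i]) (use i in \<open>auto simp: zero_less_mult_iff linorder_neq_iff\<close>)
    then show ?thesis using v unfolding scalar_prod_def by simp
  qed
  then show ?thesis unfolding posdef_mat_def sym_mat_def by simp
qed

lemma posdef_mat_det_nonzero:
  assumes "posdef_mat n M" shows "det M \<noteq> 0"
proof
  assume "det M = 0"
  then obtain v where v: "v \<in> carrier_vec n" "v \<noteq> 0\<^sub>v n" "M *\<^sub>v v = 0\<^sub>v n"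
    using det_0_iff_vec_prod_zero_field posdef_matD(1)[OF assms] by blast
  then show False using posdef_matD(3)[OF assms v(1,2)] by simp
qed

definition trace_form :: "real mat \<Rightarrow> real mat \<Rightarrow> real mat \<Rightarrow> real" where
  "trace_form A X Y = mtrace (A * X * transpose_mat Y)"

lemma trace_form_eq_sum:
  assumes "A \<in> carrier_mat p p" "X \<in> carrier_mat p p" "Y \<in> carrier_mat p p"
  shows "trace_form A X Y = (\<Sum>a<p. \<Sum>e<p. \<Sum>b<p. A$$(a,e) * X$$(e,b) * Y$$(a,b))"
proof -
  have "(A * X * transpose_mat Y) $$ (a,a) = (\<Sum>e<p. \<Sum>b<p. A$$(a,e) * X$$(e,b) * Y$$(a,b))"
    if "a < p" for a
    using assms that by (simp add: scalar_prod_def sum_distrib_left atLeast0LessThan mult.assoc)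
  then show ?thesis using assms unfolding trace_form_def mtrace_def by simp
qed

lemma trace_form_commute:
  assumes "A \<in> carrier_mat p p" "X \<in> carrier_mat p p" "Y \<in> carrier_mat p p"
    and "transpose_mat A = A"
  shows "trace_form A X Y = trace_form A Y X"
proof -
  have A_sym: "A$$(a,e) = A$$(e,a)" if "a < p" "e < p" for a e
    using assms(1,4) that by (metis carrier_matD index_transpose_mat(1))
  have "trace_form A X Y = (\<Sum>a<p. \<Sum>e<p. \<Sum>b<p. A$$(a,e) * X$$(e,b) * Y$$(a,b))"
    using trace_form_eq_sum assms by blast
  also have "\<dots> = (\<Sum>e<p. \<Sum>a<p. \<Sum>b<p. A$$(a,e) * X$$(e,b) * Y$$(a,b))"
    by (rule sum.swap)
  also have "\<dots> = (\<Sum>e<p. \<Sum>a<p. \<Sum>b<p. A$$(e,a) * Y$$(a,b) * X$$(e,b))"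
    by (intro sum.cong refl) (simp add: A_sym)
  also have "\<dots> = trace_form A Y X"
    using trace_form_eq_sum assms by simp
  finally show ?thesis .
qed

lemma trace_form_smult_left:
  assumes "A \<in> carrier_mat p p" "X \<in> carrier_mat p p" "Y \<in> carrier_mat p p"
  shows "trace_form A (s \<cdot>\<^sub>m X) Y = s * trace_form A X Y"
  using assms by (simp add: trace_form_eq_sum sum_distrib_left mult_ac)

lemma trace_form_one: "X \<in> carrier_mat p p \<Longrightarrow> trace_form (1\<^sub>m p) X Y = mtrace (X * transpose_mat Y)"
  unfolding trace_form_def by simp

lemma trace_form_lincomb_left:
  assumes "A \<in> carrier_mat p p" "set Fs \<subseteq> carrier_mat p p" "Y \<in> carrier_mat p p"
  shows "trace_form A (mat_lincomb p w Fs) Y = (\<Sum>k<length Fs. w k * trace_form A (Fs!k) Y)"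
proof -
  have F: "Fs ! k \<in> carrier_mat p p" if "k < length Fs" for k using assms(2) that by auto
  have "trace_form A (mat_lincomb p w Fs) Y =
      (\<Sum>a<p. \<Sum>e<p. \<Sum>b<p. A$$(a,e) * (\<Sum>k<length Fs. w k * Fs ! k $$ (e,b)) * Y$$(a,b))"
    using assms by (simp add: trace_form_eq_sum mat_lincomb_index)
  also have "\<dots> = (\<Sum>a<p. \<Sum>e<p. \<Sum>b<p. \<Sum>k<length Fs. w k * (A$$(a,e) * Fs ! k $$ (e,b) * Y$$(a,b)))"
    by (simp add: sum_distrib_left sum_distrib_right mult_ac)
  also have "\<dots> = (\<Sum>k<length Fs. w k * (\<Sum>a<p. \<Sum>e<p. \<Sum>b<p. A$$(a,e) * Fs ! k $$ (e,b) * Y$$(a,b)))"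
    by (simp add: sum_distrib_left sum.swap[where A="{..<length Fs}"])
  also have "\<dots> = (\<Sum>k<length Fs. w k * trace_form A (Fs!k) Y)"
    using assms F by (simp add: trace_form_eq_sum)
  finally show ?thesis .
qed

lemma trace_form_lincomb_right:
  assumes "A \<in> carrier_mat p p" "set Fs \<subseteq> carrier_mat p p" "Y \<in> carrier_mat p p"
  shows "trace_form A Y (mat_lincomb p w Fs) = (\<Sum>k<length Fs. w k * trace_form A Y (Fs!k))"
proof -
  have F: "Fs ! k \<in> carrier_mat p p" if "k < length Fs" for k using assms(2) that by auto
  have "trace_form A Y (mat_lincomb p w Fs) =
      (\<Sum>a<p. \<Sum>e<p. \<Sum>b<p. A$$(a,e) * Y$$(e,b) * (\<Sum>k<length Fs. w k * Fs ! k $$ (a,b)))"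
    using assms by (simp add: trace_form_eq_sum mat_lincomb_index)
  also have "\<dots> = (\<Sum>a<p. \<Sum>e<p. \<Sum>b<p. \<Sum>k<length Fs. w k * (A$$(a,e) * Y $$ (e,b) * Fs ! k $$(a,b)))"
    by (simp add: sum_distrib_left sum_distrib_right mult_ac)
  also have "\<dots> = (\<Sum>k<length Fs. w k * (\<Sum>a<p. \<Sum>e<p. \<Sum>b<p. A$$(a,e) * Y $$ (e,b) * Fs ! k $$(a,b)))"
    by (simp add: sum_distrib_left sum.swap[where A="{..<length Fs}"])
  also have "\<dots> = (\<Sum>k<length Fs. w k * trace_form A Y (Fs!k))"
    using assms F by (simp add: trace_form_eq_sum)
  finally show ?thesis .
qed

lemma trace_form_self_eq_sum_cols:
  assumes "A \<in> carrier_mat p p" "X \<in> carrier_mat p p"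
  shows "trace_form A X X = (\<Sum>b<p. col X b \<bullet> (A *\<^sub>v col X b))"
proof -
  have "trace_form A X X = (\<Sum>a<p. \<Sum>e<p. \<Sum>b<p. A$$(a,e) * X$$(e,b) * X$$(a,b))"
    using trace_form_eq_sum assms by blast
  also have "\<dots> = (\<Sum>a<p. \<Sum>b<p. \<Sum>e<p. A$$(a,e) * X$$(e,b) * X$$(a,b))"
    by (rule sum.cong[OF refl], rule sum.swap)
  also have "\<dots> = (\<Sum>b<p. \<Sum>a<p. \<Sum>e<p. A$$(a,e) * X$$(e,b) * X$$(a,b))"
    by (rule sum.swap)
  also have "\<dots> = (\<Sum>b<p. col X b \<bullet> (A *\<^sub>v col X b))"
    using assms by (intro sum.cong refl)
      (simp add: scalar_prod_def atLeast0LessThan sum_distrib_left sum_distrib_right mult_ac)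
  finally show ?thesis .
qed

lemma trace_form_self_pos:
  assumes "posdef_mat p A" "X \<in> carrier_mat p p" "X \<noteq> 0\<^sub>m p p"
  shows "0 < trace_form A X X"
proof -
  obtain a b where ab: "a < p" "b < p" "X $$ (a,b) \<noteq> 0"
    using exists_nonzero_entry_mat[OF assms(2,3)] .
  have cols: "col X b' \<in> carrier_vec p" for b' using assms(2) by auto
  have "col X b \<noteq> 0\<^sub>v p" using ab assms(2) by (metis carrier_matD(1) col_def index_vec index_zero_vec(1))
  then have "0 < col X b \<bullet> (A *\<^sub>v col X b)" using posdef_matD(3)[OF assms(1) cols] by blast
  then have "0 < (\<Sum>b<p. col X b \<bullet> (A *\<^sub>v col X b))"
    using ab(2) posdef_mat_quadratic_form_nonneg[OF assms(1) cols] by (intro sum_pos2[of _ b]) auto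
  then show ?thesis using trace_form_self_eq_sum_cols[OF posdef_matD(1)[OF assms(1)] assms(2)] by simp
qed

lemma psi_mat_index:
  "k < length Fs \<Longrightarrow> l < length Fs \<Longrightarrow> psi_mat A Fs $$ (k,l) = trace_form A (Fs!k) (Fs!l)"
  unfolding psi_mat_def trace_form_def by simp

lemma psi_mat_carrier [simp]: "psi_mat A Fs \<in> carrier_mat (length Fs) (length Fs)"
  unfolding psi_mat_def by simp

lemma psi_mat_dims [simp]: "dim_row (psi_mat A Fs) = length Fs" "dim_col (psi_mat A Fs) = length Fs"
  unfolding psi_mat_def by simp_all

lemma psi_mat_quadratic_form:
  assumes A: "A \<in> carrier_mat p p" and F: "set Fs \<subseteq> carrier_mat p p"
    and v: "v \<in> carrier_vec (length Fs)"
  shows "v \<bullet> (psi_mat A Fs *\<^sub>v v) =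
    trace_form A (mat_lincomb p (\<lambda>k. v $ k) Fs) (mat_lincomb p (\<lambda>k. v $ k) Fs)"
proof -
  let ?X = "mat_lincomb p (\<lambda>k. v $ k) Fs"
  have Fk: "Fs ! k \<in> carrier_mat p p" if "k < length Fs" for k using F that by auto
  have "trace_form A ?X ?X = (\<Sum>k<length Fs. v $ k * trace_form A (Fs!k) ?X)"
    using trace_form_lincomb_left[OF A F] by simp
  also have "\<dots> = (\<Sum>k<length Fs. v $ k * (\<Sum>l<length Fs. v $ l * trace_form A (Fs!k) (Fs!l)))"
    using trace_form_lincomb_right[OF A F] Fk by simp
  also have "\<dots> = v \<bullet> (psi_mat A Fs *\<^sub>v v)"
    using v by (simp add: scalar_prod_def atLeast0LessThan psi_mat_index sum_distrib_left mult_ac)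
  finally show ?thesis by simp
qed

lemma psi_mat_posdef:
  assumes A: "posdef_mat p A" and F: "set Fs \<subseteq> carrier_mat p p" and ind: "mats_lin_indep p Fs"
  shows "posdef_mat (length Fs) (psi_mat A Fs)"
proof -
  note A' = posdef_matD[OF A]
  have Fk: "Fs ! k \<in> carrier_mat p p" if "k < length Fs" for k using F that by auto
  have "sym_mat (length Fs) (psi_mat A Fs)"
    unfolding sym_mat_def using trace_form_commute[OF A'(1) Fk Fk A'(2)]
    by (auto intro!: eq_matI simp: psi_mat_index)
  moreover have "0 < v \<bullet> (psi_mat A Fs *\<^sub>v v)"
    if v: "v \<in> carrier_vec (length Fs)" "v \<noteq> 0\<^sub>v (length Fs)" for v
  proof -
    obtain k where "k < length Fs" "v $ k \<noteq> 0" using exists_nonzero_entry_vec[OF v] .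
    then have "mat_lincomb p (\<lambda>k. v $ k) Fs \<noteq> 0\<^sub>m p p"
      using ind unfolding mats_lin_indep_def by blast
    then show ?thesis using psi_mat_quadratic_form[OF A'(1) F v(1)] trace_form_self_pos[OF A] by simp
  qed
  ultimately show ?thesis unfolding posdef_mat_def by blast
qed

lemma psi_mat_lincomb:
  assumes B: "B \<in> carrier_mat p p" and F: "set Fs \<subseteq> carrier_mat p p"
    and T: "T \<in> carrier_mat (length Ws) (length Fs)"
    and W: "\<And>k. k < length Ws \<Longrightarrow> Ws ! k = mat_lincomb p (\<lambda>j. T $$ (k,j)) Fs"
  shows "psi_mat B Ws = T * psi_mat B Fs * transpose_mat T"
proof (rule eq_matI)
  fix k l assume "k < dim_row (T * psi_mat B Fs * transpose_mat T)"
    "l < dim_col (T * psi_mat B Fs * transpose_mat T)"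
  then have kl: "k < length Ws" "l < length Ws" using T by auto
  have Fj: "Fs ! j \<in> carrier_mat p p" if "j < length Fs" for j using F that by auto
  have "psi_mat B Ws $$ (k,l) = trace_form B (Ws!k) (Ws!l)" using kl by (simp add: psi_mat_index)
  also have "\<dots> = (\<Sum>j<length Fs. T $$ (k,j) * trace_form B (Fs!j) (Ws!l))"
    unfolding W[OF kl(1)] by (rule trace_form_lincomb_left[OF B F]) (simp add: W[OF kl(2)])
  also have "\<dots> = (\<Sum>j<length Fs. T $$ (k,j) *
      (\<Sum>i<length Fs. psi_mat B Fs $$ (j,i) * T $$ (l,i)))"
    unfolding W[OF kl(2)] using trace_form_lincomb_right[OF B F] Fj
    by (simp add: psi_mat_index mult.commute)
  also have "\<dots> = (T * (psi_mat B Fs * transpose_mat T)) $$ (k,l)"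
    using kl T by (simp add: scalar_prod_def atLeast0LessThan)
  also have "T * (psi_mat B Fs * transpose_mat T) = T * psi_mat B Fs * transpose_mat T"
    using assoc_mult_mat[OF T psi_mat_carrier, of "transpose_mat T" "length Ws"] T by simp
  finally show "psi_mat B Ws $$ (k,l) = (T * psi_mat B Fs * transpose_mat T) $$ (k,l)" .
qed (use T in auto)

section \<open>Gram matrices and coordinates in an orthonormal basis\<close>

lemma trace_form_one_orthonormal:
  assumes "orthonormal_mats fs" "set fs \<subseteq> carrier_mat p p" "j < length fs" "k < length fs"
  shows "trace_form (1\<^sub>m p) (fs!j) (fs!k) = (if j = k then 1 else 0)"
proof -
  have "fs ! j \<in> carrier_mat p p" using assms(2,3) by auto
  then show ?thesis using assms(1,3,4) unfolding orthonormal_mats_def by (simp add: trace_form_one)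
qed

lemma psi_mat_one_orthonormal:
  assumes "orthonormal_mats fs" "set fs \<subseteq> carrier_mat p p"
  shows "psi_mat (1\<^sub>m p) fs = 1\<^sub>m (length fs)"
  by (rule eq_matI) (use trace_form_one_orthonormal[OF assms] in \<open>auto simp: psi_mat_index\<close>)

lemma gram_mat_eq_psi_mat_one:
  assumes "set Us \<subseteq> carrier_mat p p"
  shows "gram_mat Us = psi_mat (1\<^sub>m p) Us"
proof -
  have "Us ! t \<in> carrier_mat p p" if "t < length Us" for t using assms that by auto
  then show ?thesis by (intro eq_matI) (auto simp: gram_mat_def psi_mat_index trace_form_one)
qed

lemma lin_indep_if_det_gram_mat_nonzero:
  assumes W: "set Ws \<subseteq> carrier_mat p p" and d: "det (gram_mat Ws) \<noteq> 0"
  shows "mats_lin_indep p Ws"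
  unfolding mats_lin_indep_def
proof (rule allI, rule impI)
  fix w assume w0: "mat_lincomb p w Ws = 0\<^sub>m p p"
  let ?m = "length Ws"
  have Wk: "Ws ! k \<in> carrier_mat p p" if "k < ?m" for k using W that by auto
  have G: "gram_mat Ws \<in> carrier_mat ?m ?m" by (simp add: gram_mat_def)
  have "gram_mat Ws *\<^sub>v vec ?m w = 0\<^sub>v ?m"
  proof (rule eq_vecI)
    fix k assume "k < dim_vec (0\<^sub>v ?m :: real vec)"
    then have k: "k < ?m" by simp
    have "(gram_mat Ws *\<^sub>v vec ?m w) $ k = trace_form (1\<^sub>m p) (Ws!k) (mat_lincomb p w Ws)"
      using k trace_form_lincomb_right[OF one_carrier_mat W Wk[OF k]]
      by (simp add: gram_mat_eq_psi_mat_one[OF W] scalar_prod_def atLeast0LessThan psi_mat_index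
          mult.commute)
    also have "\<dots> = 0"
      using w0 trace_form_eq_sum[OF one_carrier_mat Wk[OF k] zero_carrier_mat] by simp
    finally show "(gram_mat Ws *\<^sub>v vec ?m w) $ k = 0\<^sub>v ?m $ k" using k by simp
  qed (use G in simp)
  then have "vec ?m w = 0\<^sub>v ?m"
    using det_0_iff_vec_prod_zero_field[OF G] d vec_carrier by blast
  then show "\<forall>k<?m. w k = 0" by (metis index_vec index_zero_vec(1))
qed

lemma is_mat_basis_if_det_gram_mat_nonzero:
  assumes fs: "set fs \<subseteq> carrier_mat p p" "mats_lin_indep p fs"
    and Ws: "set Ws \<subseteq> mats_span p fs" "length Ws = length fs" "det (gram_mat Ws) \<noteq> 0"
  shows "is_mat_basis p (mats_span p fs) Ws"
proof -
  have WC: "set Ws \<subseteq> carrier_mat p p" using Ws(1) mats_span_carrier by blast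
  have ind: "mats_lin_indep p Ws" by (rule lin_indep_if_det_gram_mat_nonzero[OF WC Ws(3)])
  show ?thesis
    unfolding is_mat_basis_def using WC ind mats_span_eq_if_lin_indep_length_eq[OF fs ind Ws(1,2)]
    by simp
qed

lemma mat_lincomb_orthonormal_coords:
  assumes on: "orthonormal_mats fs" and fC: "set fs \<subseteq> carrier_mat p p" and X: "X \<in> mats_span p fs"
  shows "X = mat_lincomb p (\<lambda>j. mtrace (X * transpose_mat (fs!j))) fs"
proof -
  obtain w where Xw: "X = mat_lincomb p w fs" using X unfolding mats_span_def by auto
  have "mtrace (X * transpose_mat (fs!j)) = w j" if j: "j < length fs" for j
  proof -
    have fj: "fs ! j \<in> carrier_mat p p" using fC j by auto
    have "mtrace (X * transpose_mat (fs!j)) = trace_form (1\<^sub>m p) X (fs!j)"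
      using Xw by (simp add: trace_form_one)
    also have "\<dots> = (\<Sum>k<length fs. w k * trace_form (1\<^sub>m p) (fs!k) (fs!j))"
      unfolding Xw by (rule trace_form_lincomb_left[OF one_carrier_mat fC fj])
    also have "\<dots> = (\<Sum>k<length fs. if k = j then w k else 0)"
      using trace_form_one_orthonormal[OF on fC _ j] by (intro sum.cong refl) auto
    also have "\<dots> = w j" using j by (simp add: sum.delta)
    finally show ?thesis .
  qed
  then have "mat_lincomb p (\<lambda>j. mtrace (X * transpose_mat (fs!j))) fs = mat_lincomb p w fs"
    by (intro mat_lincomb_cong) simp
  with Xw show ?thesis by simp
qed

definition coord_mat :: "real mat list \<Rightarrow> real mat list \<Rightarrow> real mat" where
  "coord_mat Ws fs = mat (length Ws) (length fs) (\<lambda>(k,j). mtrace (Ws ! k * transpose_mat (fs ! j)))"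

lemma coord_mat_carrier [simp]: "coord_mat Ws fs \<in> carrier_mat (length Ws) (length fs)"
  unfolding coord_mat_def by simp

lemma coord_mat_rows:
  assumes "orthonormal_mats fs" "set fs \<subseteq> carrier_mat p p" "set Ws \<subseteq> mats_span p fs"
    and "k < length Ws"
  shows "Ws ! k = mat_lincomb p (\<lambda>j. coord_mat Ws fs $$ (k,j)) fs"
proof -
  have "Ws ! k = mat_lincomb p (\<lambda>j. mtrace (Ws ! k * transpose_mat (fs!j))) fs"
    using assms by (intro mat_lincomb_orthonormal_coords) auto
  also have "\<dots> = mat_lincomb p (\<lambda>j. coord_mat Ws fs $$ (k,j)) fs"
    using assms(4) by (intro mat_lincomb_cong) (simp add: coord_mat_def)
  finally show ?thesis .
qed

lemma psi_mat_coord_mat: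
  assumes "A \<in> carrier_mat p p" "orthonormal_mats fs" "set fs \<subseteq> carrier_mat p p"
    and "set Ws \<subseteq> mats_span p fs"
  shows "psi_mat A Ws = coord_mat Ws fs * psi_mat A fs * transpose_mat (coord_mat Ws fs)"
  using psi_mat_lincomb[OF assms(1,3) coord_mat_carrier coord_mat_rows[OF assms(2-4)]] .

lemma gram_mat_coord_mat:
  assumes "orthonormal_mats fs" "set fs \<subseteq> carrier_mat p p" "set Ws \<subseteq> mats_span p fs"
  shows "gram_mat Ws = coord_mat Ws fs * transpose_mat (coord_mat Ws fs)"
proof -
  have "set Ws \<subseteq> carrier_mat p p" using assms(3) mats_span_carrier by blast
  then have "gram_mat Ws = coord_mat Ws fs * psi_mat (1\<^sub>m p) fs * transpose_mat (coord_mat Ws fs)"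
    using gram_mat_eq_psi_mat_one psi_mat_coord_mat[OF one_carrier_mat assms] by simp
  then show ?thesis
    using psi_mat_one_orthonormal[OF assms(1,2)] right_mult_one_mat[OF coord_mat_carrier] by simp
qed

lemma det_gram_mat_coord_mat:
  assumes "orthonormal_mats fs" "set fs \<subseteq> carrier_mat p p" "set Ws \<subseteq> mats_span p fs"
    and "length Ws = length fs"
  shows "det (gram_mat Ws) = det (coord_mat Ws fs) * det (coord_mat Ws fs)"
proof -
  have T: "coord_mat Ws fs \<in> carrier_mat (length fs) (length fs)"
    using coord_mat_carrier[of Ws fs] assms(4) by simp
  show ?thesis
    unfolding gram_mat_coord_mat[OF assms(1-3)] det_mult[OF T transpose_carrier_mat[THEN iffD2, OF T]]
    by (simp add: det_transpose[OF T])
qed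

lemma det_mult_transpose_sandwich:
  fixes T P :: "'a::comm_ring_1 mat"
  assumes "T \<in> carrier_mat n n" "P \<in> carrier_mat n n"
  shows "det (T * P * transpose_mat T) = det T * det P * det T"
  using assms by (simp add: det_mult[of _ n] det_transpose)

lemma det_psi_mat_eq_div_det_gram_mat:
  assumes A: "A \<in> carrier_mat p p" and fs: "set fs \<subseteq> carrier_mat p p" "orthonormal_mats fs"
    and Ws: "set Ws \<subseteq> mats_span p fs" "length Ws = length fs" "det (gram_mat Ws) \<noteq> 0"
  shows "det (psi_mat A fs) = det (psi_mat A Ws) / det (gram_mat Ws)"
proof -
  have T: "coord_mat Ws fs \<in> carrier_mat (length fs) (length fs)"
    using coord_mat_carrier[of Ws fs] Ws(2) by simp
  have "det (psi_mat A Ws) = det (coord_mat Ws fs) * det (psi_mat A fs) * det (coord_mat Ws fs)"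
    unfolding psi_mat_coord_mat[OF A fs(2,1) Ws(1)] by (rule det_mult_transpose_sandwich[OF T]) simp
  then show ?thesis using det_gram_mat_coord_mat[OF fs(2,1) Ws(1,2)] Ws(3) by simp
qed

lemma rank_mult_le_inner_dim:
  fixes T S :: "'a::field mat"
  assumes T: "T \<in> carrier_mat q n" and S: "S \<in> carrier_mat n k"
  shows "vec_space.rank q (T * S) \<le> n"
proof -
  interpret V: vec_space "TYPE('a)" q .
  define P where "P j = mat q k (\<lambda>(t,s). \<Sum>i<j. T $$ (t,i) * S $$ (i,s))" for j
  have "V.rank (P j) \<le> j" for j
  proof (induction j)
    case 0
    have "P 0 = 0\<^sub>m q k" unfolding P_def by (rule eq_matI) auto
    then show ?case using V.rank_0I by simp
  next
    case (Suc j)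
    define R where "R = mat q k (\<lambda>(t,s). T $$ (t,j) * S $$ (j,s))"
    have "P (Suc j) = P j + R" unfolding P_def R_def by (rule eq_matI) auto
    moreover have "V.rank (P j + R) \<le> V.rank (P j) + V.rank R"
      by (rule V.rank_subadditive) (auto simp: P_def R_def)
    moreover have "V.rank R \<le> 1"
      by (rule V.rank_le_1_product_entries[of R k "\<lambda>t. T $$ (t,j)" "\<lambda>s. S $$ (j,s)"])
        (auto simp: R_def)
    ultimately show ?case using Suc.IH by simp
  qed
  moreover have "T * S = P n"
    using T S by (intro eq_matI) (auto simp: P_def scalar_prod_def atLeast0LessThan)
  ultimately show ?thesis by simp
qed

lemma submatrix_gram_mat:
  assumes "I \<subseteq> {..<length Us}"
  shows "submatrix (gram_mat Us) I I = gram_mat (nths Us I)"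
proof -
  have card: "card {i. i < length Us \<and> i \<in> I} = card I"
    using assms by (intro arg_cong[where f = card]) auto
  have len: "length (nths Us I) = card I" using card by (simp add: length_nths)
  have pick: "pick I k < length Us" if "k < card I" for k
    using pick_in_set_le[OF that] assms by auto
  show ?thesis
  proof (rule eq_matI)
    fix k l assume "k < dim_row (gram_mat (nths Us I))" "l < dim_col (gram_mat (nths Us I))"
    then have kl: "k < card I" "l < card I" using len by (auto simp: gram_mat_def)
    then show "submatrix (gram_mat Us) I I $$ (k,l) = gram_mat (nths Us I) $$ (k,l)"
      using card len pick[OF kl(1)] pick[OF kl(2)]
      by (simp add: submatrix_index gram_mat_def nth_nths)
  qed (use card len in \<open>auto simp: dim_submatrix gram_mat_def\<close>)
qed

(* G = T T^T for the coordinate matrix T bounds the rank from above; a basis extracted from Us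
   yields a nonsingular principal minor of full size. *)
lemma rank_gram_mat:
  assumes fs: "set fs \<subseteq> carrier_mat p p" "orthonormal_mats fs" "mats_lin_indep p fs"
    and Us: "set Us \<subseteq> carrier_mat p p" "mats_span p Us = mats_span p fs"
  shows "mat_rank (length Us) (gram_mat Us) = length fs"
proof -
  interpret V: vec_space "TYPE(real)" "length Us" .
  have G: "gram_mat Us \<in> carrier_mat (length Us) (length Us)" by (simp add: gram_mat_def)
  have Us_fs: "set Us \<subseteq> mats_span p fs" using set_subset_mats_span[OF Us(1)] Us(2) by simp
  have upper: "V.rank (gram_mat Us) \<le> length fs"
    unfolding gram_mat_coord_mat[OF fs(2,1) Us_fs] by (rule rank_mult_le_inner_dim[OF coord_mat_carrier transpose_carrier_mat[THEN iffD2, OF coord_mat_carrier]])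
  obtain I where I: "I \<subseteq> {..<length Us}" "mats_lin_indep p (nths Us I)"
    "set Us \<subseteq> mats_span p (nths Us I)"
    using exists_lin_indep_nths_spanning[OF Us(1)] by blast
  let ?W = "nths Us I"
  have W: "set ?W \<subseteq> carrier_mat p p" "set ?W \<subseteq> mats_span p fs"
    using Us(1) Us_fs by (auto dest: in_set_nthsD)
  have "mats_span p ?W = mats_span p fs"
    using mats_span_subset_mats_span[OF W(2)] mats_span_subset_mats_span[OF I(3)] Us(2) by auto
  then have "is_mat_basis p (mats_span p fs) ?W" unfolding is_mat_basis_def using W(1) I(2) by simp
  moreover have "is_mat_basis p (mats_span p fs) fs" unfolding is_mat_basis_def using fs by simp
  ultimately have len: "length ?W = length fs" by (rule is_mat_basis_length_eq)
  have "det (submatrix (gram_mat Us) I I) \<noteq> 0"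
    unfolding submatrix_gram_mat[OF I(1)] gram_mat_eq_psi_mat_one[OF W(1)]
    by (rule posdef_mat_det_nonzero[OF psi_mat_posdef[OF posdef_mat_one W(1) I(2)]])
  from V.rank_gt_minor[OF G this] have "length ?W \<le> V.rank (gram_mat Us)"
    by (simp add: length_nths)
  then show ?thesis unfolding mat_rank_def using upper len by simp
qed

lemma principal_submatrix_gram_mat_map:
  assumes "length ts = n" "set ts \<subseteq> {..<q}"
  shows "mat n n (\<lambda>(k,l). gram_mat (map U [0..<q]) $$ (ts ! k, ts ! l)) = gram_mat (map U ts)"
proof -
  have "ts ! k < q" if "k < n" for k using assms that by (metis lessThan_iff nth_mem subsetD)
  then show ?thesis using assms(1) by (intro eq_matI) (auto simp: gram_mat_def)
qed

section \<open>Schur complements\<close>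

lemma mat_inverse_exists:
  fixes M :: "'a::field mat"
  assumes M: "M \<in> carrier_mat n n" and d: "det M \<noteq> 0"
  obtains Mi where "mat_inverse M = Some Mi" "M * Mi = 1\<^sub>m n" "Mi * M = 1\<^sub>m n" "Mi \<in> carrier_mat n n"
proof -
  have "M \<in> Units (ring_mat TYPE('a) n ())" by (rule det_non_zero_imp_unit[OF M d])
  moreover have "M \<notin> Units (ring_mat TYPE('a) n ())" if "mat_inverse M = None"
    using mat_inverse(1)[OF M that] .
  ultimately have "mat_inverse M \<noteq> None" by blast
  then obtain Mi where Mi: "mat_inverse M = Some Mi" by blast
  then show ?thesis using mat_inverse(2)[OF M Mi] that by blast
qed

lemma congruence_inverse:
  fixes T P Qi :: "'a::field mat"
  assumes T: "T \<in> carrier_mat n n" "det T \<noteq> 0" and P: "P \<in> carrier_mat n n"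
    and Qi: "Qi \<in> carrier_mat n n" "T * P * transpose_mat T * Qi = 1\<^sub>m n"
  shows "P * (transpose_mat T * Qi * T) = 1\<^sub>m n"
proof -
  obtain Ti where Ti: "Ti * T = 1\<^sub>m n" "Ti \<in> carrier_mat n n"
    using mat_inverse_exists[OF T] by metis
  define X where "X = transpose_mat T * Qi * T"
  have X: "X \<in> carrier_mat n n" unfolding X_def using T Qi by simp
  have "T * (P * X) = (T * P * transpose_mat T * Qi) * T"
    unfolding X_def using T P Qi(1) by (simp add: assoc_mult_mat[of _ n n _ n _ n])
  also have "\<dots> = T" using Qi(2) T by simp
  finally have TPX: "T * (P * X) = T" .
  have "P * X = (Ti * T) * (P * X)" by (subst Ti(1)) (use P X in simp)
  also have "\<dots> = Ti * (T * (P * X))" by (rule assoc_mult_mat[OF Ti(2) T(1) mult_carrier_mat[OF P X]])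
  also have "\<dots> = 1\<^sub>m n" using TPX Ti by simp
  finally show ?thesis unfolding X_def .
qed

lemma det_four_block_schur:
  fixes a v w P X :: "'a::field mat"
  assumes a: "a \<in> carrier_mat 1 1" and v: "v \<in> carrier_mat 1 n" and w: "w \<in> carrier_mat n 1"
    and P: "P \<in> carrier_mat n n" and X: "X \<in> carrier_mat n n" "P * X = 1\<^sub>m n"
  shows "det (four_block_mat a v w P) = (a - v * X * w) $$ (0,0) * det P"
proof -
  define Y where "Y = - (X * w)"
  have Y: "Y \<in> carrier_mat n 1" using X w unfolding Y_def by simp
  define M where "M = four_block_mat (1\<^sub>m 1) (0\<^sub>m 1 n) Y (1\<^sub>m n)"
  have M: "M \<in> carrier_mat (1 + n) (1 + n)" unfolding M_def by (rule four_block_carrier_mat) simp_all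
  have "det M = 1" unfolding M_def
    by (subst det_four_block_mat_upper_right_zero[OF one_carrier_mat refl Y one_carrier_mat]) simp
  have schur: "a + v * Y = a - v * X * w"
    unfolding Y_def using a v X w by (intro eq_matI) (auto simp: assoc_mult_mat[of v 1 n X n w 1])
  have "P * Y = - w" unfolding Y_def using P X w by (simp add: assoc_mult_mat[symmetric, of P n n X n w 1])
  then have lower: "w + P * Y = 0\<^sub>m n 1" using w by (intro eq_matI) auto
  have prod: "four_block_mat a v w P * M = four_block_mat (a - v * X * w) v (0\<^sub>m n 1) P"
    unfolding M_def mult_four_block_mat[OF a v w P one_carrier_mat zero_carrier_mat Y one_carrier_mat]
    using a v w P schur lower by simp
  have S: "a - v * X * w \<in> carrier_mat 1 1"
    using minus_carrier_mat[OF mult_carrier_mat[OF mult_carrier_mat[OF v X(1)] w]] a by simp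
  have "det (four_block_mat a v w P) = det (four_block_mat a v w P * M)"
    using det_mult[OF four_block_carrier_mat[OF a P, of v w] M] \<open>det M = 1\<close> by simp
  also have "\<dots> = det (a - v * X * w) * det P"
    unfolding prod by (rule det_four_block_mat_lower_left_zero[OF S v refl P])
  also have "det (a - v * X * w) = (a - v * X * w) $$ (0,0)" by (rule det_single[OF S])
  finally show ?thesis .
qed

lemma det_four_block_schur_congruence:
  fixes a v T P Qi :: "'a::field mat"
  assumes a: "a \<in> carrier_mat 1 1" and v: "v \<in> carrier_mat 1 n"
    and T: "T \<in> carrier_mat n n" "det T \<noteq> 0" and P: "P \<in> carrier_mat n n"
    and Qi: "Qi \<in> carrier_mat n n" "T * P * transpose_mat T * Qi = 1\<^sub>m n"
  shows "det (four_block_mat a v (transpose_mat v) P) =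
    (a - (v * transpose_mat T) * Qi * transpose_mat (v * transpose_mat T)) $$ (0,0) * det P"
proof -
  let ?X = "transpose_mat T * Qi * T"
  have "det (four_block_mat a v (transpose_mat v) P) = (a - v * ?X * transpose_mat v) $$ (0,0) * det P"
    using a v T P Qi congruence_inverse[OF T P Qi] by (intro det_four_block_schur) auto
  also have "v * ?X * transpose_mat v = (v * transpose_mat T) * Qi * transpose_mat (v * transpose_mat T)"
    using v T Qi(1)
    by (simp add: transpose_mult[OF v transpose_carrier_mat[THEN iffD2, OF T(1)]]
        assoc_mult_mat[of _ 1 n _ n _ n] assoc_mult_mat[of _ 1 n _ n _ 1]
        assoc_mult_mat[of _ n n _ n _ n] assoc_mult_mat[of _ n n _ n _ 1])
  finally show ?thesis .
qed

lemma phi_mat_four_block: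
  "phi_mat A et fs = four_block_mat (mat 1 1 (\<lambda>_. mtrace (A * et * et)))
      (mat 1 (length fs) (\<lambda>(_,j). trace_form A et (fs!j)))
      (transpose_mat (mat 1 (length fs) (\<lambda>(_,j). trace_form A et (fs!j)))) (psi_mat A fs)"
  by (rule eq_matI) (auto simp: phi_mat_def psi_mat_def trace_form_def)

lemma row_trace_form_lincomb:
  assumes "A \<in> carrier_mat p p" "Y \<in> carrier_mat p p" "set Fs \<subseteq> carrier_mat p p"
    and T: "T \<in> carrier_mat (length Ws) (length Fs)"
    and W: "\<And>k. k < length Ws \<Longrightarrow> Ws ! k = mat_lincomb p (\<lambda>j. T $$ (k,j)) Fs"
  shows "mat 1 (length Ws) (\<lambda>(_,k). trace_form A Y (Ws!k)) =
    mat 1 (length Fs) (\<lambda>(_,j). trace_form A Y (Fs!j)) * transpose_mat T"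
proof -
  have "trace_form A Y (Ws!k) = (\<Sum>j<length Fs. T $$ (k,j) * trace_form A Y (Fs!j))"
    if "k < length Ws" for k
    unfolding W[OF that] by (rule trace_form_lincomb_right[OF assms(1,3,2)])
  then show ?thesis
    using T by (intro eq_matI) (auto simp: scalar_prod_def atLeast0LessThan mult.commute)
qed

(* With T the coordinate matrix of Ws, psi_mat A Ws = T psi T^T and V = v T^T, so the Schur
   complement of psi in phi can be computed from Ws instead of fs. *)
lemma det_phi_mat_schur:
  assumes A: "posdef_mat p A"
    and fs: "set fs \<subseteq> carrier_mat p p" "orthonormal_mats fs" "mats_lin_indep p fs"
    and Ws: "set Ws \<subseteq> mats_span p fs" "length Ws = length fs" "det (gram_mat Ws) \<noteq> 0"
    and et: "et \<in> carrier_mat p p"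
  defines "V \<equiv> mat 1 (length Ws) (\<lambda>(_, k). trace_form A et (Ws ! k))"
  shows "det (phi_mat A et fs) / det (psi_mat A fs) =
    mtrace (A * et * et) - (V * the (mat_inverse (psi_mat A Ws)) * transpose_mat V) $$ (0,0)"
proof -
  let ?n = "length fs" and ?\<psi> = "psi_mat A fs" and ?\<Psi> = "psi_mat A Ws"
  define T where "T = coord_mat Ws fs"
  define v where "v = mat 1 ?n (\<lambda>(_, j). trace_form A et (fs ! j))"
  have Ac: "A \<in> carrier_mat p p" using posdef_matD(1)[OF A] .
  have T: "T \<in> carrier_mat ?n ?n" using coord_mat_carrier[of Ws fs] Ws(2) unfolding T_def by simp
  have \<Psi>: "?\<Psi> \<in> carrier_mat ?n ?n" using psi_mat_carrier[of A Ws] Ws(2) by simp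
  have \<Psi>_eq: "?\<Psi> = T * ?\<psi> * transpose_mat T"
    unfolding T_def by (rule psi_mat_coord_mat[OF Ac fs(2,1) Ws(1)])
  have dT: "det T \<noteq> 0" using det_gram_mat_coord_mat[OF fs(2,1) Ws(1,2)] Ws(3) unfolding T_def by simp
  have "is_mat_basis p (mats_span p fs) Ws"
    by (rule is_mat_basis_if_det_gram_mat_nonzero[OF fs(1,3) Ws])
  then have "posdef_mat ?n ?\<Psi>" using psi_mat_posdef[OF A] Ws(2) unfolding is_mat_basis_def by metis
  then obtain \<Psi>i where \<Psi>i: "mat_inverse ?\<Psi> = Some \<Psi>i" "?\<Psi> * \<Psi>i = 1\<^sub>m ?n" "\<Psi>i \<in> carrier_mat ?n ?n"
    using mat_inverse_exists[OF \<Psi> posdef_mat_det_nonzero] by metis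
  have v: "v \<in> carrier_mat 1 ?n" unfolding v_def by simp
  have V_eq: "V = v * transpose_mat T"
    unfolding V_def v_def T_def
    by (rule row_trace_form_lincomb[OF Ac et fs(1) coord_mat_carrier coord_mat_rows[OF fs(2,1) Ws(1)]])
  let ?B = "V * \<Psi>i * transpose_mat V"
  have V: "V \<in> carrier_mat 1 ?n"
    unfolding V_eq using mult_carrier_mat[OF v transpose_carrier_mat[THEN iffD2, OF T]] .
  have B: "?B \<in> carrier_mat 1 1"
    using mult_carrier_mat[OF mult_carrier_mat[OF V \<Psi>i(3)] transpose_carrier_mat[THEN iffD2, OF V]] .
  have "det (phi_mat A et fs) =
      (mat 1 1 (\<lambda>_. mtrace (A * et * et)) - ?B) $$ (0,0) * det ?\<psi>"
    unfolding phi_mat_four_block v_def[symmetric] V_eq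
    by (rule det_four_block_schur_congruence[OF _ v T dT psi_mat_carrier \<Psi>i(3)])
      (use \<Psi>i(2) \<Psi>_eq in simp_all)
  also have "(mat 1 1 (\<lambda>_. mtrace (A * et * et)) - ?B) $$ (0,0) = mtrace (A * et * et) - ?B $$ (0,0)"
    using carrier_matD[OF B] by simp
  finally have "det (phi_mat A et fs) = (mtrace (A * et * et) - ?B $$ (0,0)) * det ?\<psi>" .
  moreover have "det ?\<psi> \<noteq> 0" using posdef_mat_det_nonzero[OF psi_mat_posdef[OF A fs(1,3)]] .
  ultimately show ?thesis using \<Psi>i(1) by simp
qed

lemma mtrace_smult: "M \<in> carrier_mat n n \<Longrightarrow> mtrace (s \<cdot>\<^sub>m M) = s * mtrace M"
  unfolding mtrace_def by (simp add: sum_distrib_left)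

(* Also true for mu = 0, where both sides are 0 since 1 / sqrt 0 = 0 and x / 0 = 0. *)
lemma mtrace_scaled_idempotent:
  assumes A: "A \<in> carrier_mat p p" and c: "c \<in> carrier_mat p p" "c * c = c" and \<mu>: "0 \<le> \<mu>"
  shows "mtrace (A * ((1 / sqrt \<mu>) \<cdot>\<^sub>m c) * ((1 / sqrt \<mu>) \<cdot>\<^sub>m c)) = mtrace (A * c) / \<mu>"
proof -
  let ?s = "1 / sqrt \<mu>"
  have Ac: "A * c \<in> carrier_mat p p" using mult_carrier_mat[OF A c(1)] .
  have "A * (?s \<cdot>\<^sub>m c) * (?s \<cdot>\<^sub>m c) = ?s \<cdot>\<^sub>m (A * c) * (?s \<cdot>\<^sub>m c)"
    using mult_smult_distrib[OF A c(1)] by simp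
  also have "\<dots> = ?s \<cdot>\<^sub>m (A * c * (?s \<cdot>\<^sub>m c))"
    by (rule mult_smult_assoc_mat[OF Ac smult_carrier_mat[OF c(1)]])
  also have "A * c * (?s \<cdot>\<^sub>m c) = ?s \<cdot>\<^sub>m (A * (c * c))"
    using mult_smult_distrib[OF Ac c(1)] assoc_mult_mat[OF A c(1) c(1)] by simp
  finally have eq: "A * (?s \<cdot>\<^sub>m c) * (?s \<cdot>\<^sub>m c) = ?s \<cdot>\<^sub>m (?s \<cdot>\<^sub>m (A * c))"
    using c(2) by simp
  have "mtrace (?s \<cdot>\<^sub>m (?s \<cdot>\<^sub>m (A * c))) = (?s * ?s) * mtrace (A * c)"
    using mtrace_smult[OF smult_carrier_mat[OF Ac]] mtrace_smult[OF Ac] by simp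
  also have "?s * ?s = 1 / \<mu>" using \<mu> by (simp add: real_sqrt_mult_self)
  finally show ?thesis using eq by simp
qed

lemma det_phi_mat_schur_idempotent:
  assumes A: "posdef_mat p A"
    and fs: "set fs \<subseteq> carrier_mat p p" "orthonormal_mats fs" "mats_lin_indep p fs"
    and Ws: "set Ws \<subseteq> mats_span p fs" "length Ws = length fs" "det (gram_mat Ws) \<noteq> 0"
    and c: "c \<in> carrier_mat p p" "c * c = c" and \<mu>: "0 \<le> \<mu>"
  defines "V \<equiv> mat 1 (length fs) (\<lambda>(_, k). mtrace (A * c * transpose_mat (Ws ! k)) / sqrt \<mu>)"
  shows "det (phi_mat A ((1 / sqrt \<mu>) \<cdot>\<^sub>m c) fs) / det (psi_mat A fs) =
    mtrace (A * c) / \<mu> - (V * the (mat_inverse (psi_mat A Ws)) * transpose_mat V) $$ (0,0)"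
proof -
  have Ac: "A \<in> carrier_mat p p" using posdef_matD(1)[OF A] .
  have "trace_form A ((1 / sqrt \<mu>) \<cdot>\<^sub>m c) (Ws ! k) = mtrace (A * c * transpose_mat (Ws ! k)) / sqrt \<mu>"
    if "k < length Ws" for k
  proof -
    have "Ws ! k \<in> carrier_mat p p" using Ws(1) that mats_span_carrier nth_mem by blast
    then show ?thesis using trace_form_smult_left[OF Ac c(1)] by (simp add: trace_form_def)
  qed
  then have "V = mat 1 (length Ws) (\<lambda>(_, k). trace_form A ((1 / sqrt \<mu>) \<cdot>\<^sub>m c) (Ws ! k))"
    unfolding V_def using Ws(2) by (intro eq_matI) auto
  then show ?thesis
    using det_phi_mat_schur[OF A fs Ws smult_carrier_mat[OF c(1)]]
      mtrace_scaled_idempotent[OF Ac c \<mu>] by simp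
qed

lemma det_phi_mat_div_det_psi_mat_Nil: "det (phi_mat A et []) / det (psi_mat A []) = mtrace (A * et * et)"
proof -
  have "det (phi_mat A et []) = phi_mat A et [] $$ (0,0)" by (rule det_single) (simp add: phi_mat_def)
  moreover have "det (psi_mat A []) = 1" by (rule det_dim_zero) (simp add: psi_mat_def)
  ultimately show ?thesis by (simp add: phi_mat_def)
qed

lemma spanning_family_pivots:
  fixes U :: "nat \<Rightarrow> real mat"
  assumes A: "posdef_mat p A"
    and fs: "set fs \<subseteq> carrier_mat p p" "mats_lin_indep p fs" "orthonormal_mats fs"
    and U: "set (map U [0..<q]) \<subseteq> carrier_mat p p" "mats_span p (map U [0..<q]) = mats_span p fs"
    and c: "c \<in> carrier_mat p p" "c * c = c" and \<mu>: "0 \<le> \<mu>"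
  shows
   "let m = length fs;
        G = gram_mat (map U [0..<q]);
        \<psi> = psi_mat A fs;
        \<phi> = phi_mat A ((1 / sqrt \<mu>) \<cdot>\<^sub>m c) fs;
        lam = mtrace (A * c) / \<mu>
    in m = mat_rank q G \<and>
       (0 < m \<longrightarrow>
         (\<forall>ts. length ts = m \<and> set ts \<subseteq> {..<q} \<and>
                det (mat m m (\<lambda>(k,l). G $$ (ts ! k, ts ! l))) \<noteq> 0 \<longrightarrow>
           (let Gt = mat m m (\<lambda>(k,l). G $$ (ts ! k, ts ! l));
                U' = map U ts;
                \<Psi> = psi_mat A U';
                V = mat 1 m (\<lambda>(_,k). mtrace (A * c * transpose_mat (U' ! k)) / sqrt \<mu>)
            in is_mat_basis p (mats_span p fs) U' \<and>
               posdef_mat m \<Psi> \<and>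
               det \<psi> = det \<Psi> / det Gt \<and>
               det \<phi> / det \<psi> = lam - (V * the (mat_inverse \<Psi>) * transpose_mat V) $$ (0,0)))) \<and>
       (m = 0 \<longrightarrow> det \<phi> / det \<psi> = lam)"
proof -
  let ?G = "gram_mat (map U [0..<q])"
  let ?Gt = "\<lambda>ts. mat (length fs) (length fs) (\<lambda>(k,l). ?G $$ (ts ! k, ts ! l))"
  let ?V = "\<lambda>ts. mat 1 (length fs) (\<lambda>(_,k). mtrace (A * c * transpose_mat (map U ts ! k)) / sqrt \<mu>)"
  have "U t \<in> mats_span p fs" if "t < q" for t
    using set_subset_mats_span[OF U(1)] U(2) that by (auto simp: image_subset_iff)
  then have U_fs: "set (map U ts) \<subseteq> mats_span p fs" if "set ts \<subseteq> {..<q}" for ts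
    using that by auto
  have pivots: "is_mat_basis p (mats_span p fs) (map U ts) \<and>
      posdef_mat (length fs) (psi_mat A (map U ts)) \<and>
      det (psi_mat A fs) = det (psi_mat A (map U ts)) / det (?Gt ts) \<and>
      det (phi_mat A ((1 / sqrt \<mu>) \<cdot>\<^sub>m c) fs) / det (psi_mat A fs) = mtrace (A * c) / \<mu> -
        (?V ts * the (mat_inverse (psi_mat A (map U ts))) * transpose_mat (?V ts)) $$ (0,0)"
    if ts: "length ts = length fs \<and> set ts \<subseteq> {..<q} \<and> det (?Gt ts) \<noteq> 0" for ts
  proof -
    have Gt: "?Gt ts = gram_mat (map U ts)" using ts by (intro principal_submatrix_gram_mat_map) auto
    then have Ws: "set (map U ts) \<subseteq> mats_span p fs" "length (map U ts) = length fs"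
      "det (gram_mat (map U ts)) \<noteq> 0" using ts U_fs by auto
    have basis: "is_mat_basis p (mats_span p fs) (map U ts)"
      by (rule is_mat_basis_if_det_gram_mat_nonzero[OF fs(1,2) Ws])
    moreover have "posdef_mat (length fs) (psi_mat A (map U ts))"
      using psi_mat_posdef[OF A] basis Ws(2) unfolding is_mat_basis_def by metis
    moreover note det_psi_mat_eq_div_det_gram_mat[OF posdef_matD(1)[OF A] fs(1,3) Ws]
      det_phi_mat_schur_idempotent[OF A fs(1,3,2) Ws c \<mu>]
    ultimately show ?thesis unfolding Gt by blast
  qed
  have "length fs = 0 \<Longrightarrow>
      det (phi_mat A ((1 / sqrt \<mu>) \<cdot>\<^sub>m c) fs) / det (psi_mat A fs) = mtrace (A * c) / \<mu>"
    using det_phi_mat_div_det_psi_mat_Nil mtrace_scaled_idempotent[OF posdef_matD(1)[OF A] c \<mu>]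
    by simp
  moreover have "length fs = mat_rank q (gram_mat (map U [0..<q]))"
    using rank_gram_mat[OF fs(1,3,2) U] by simp
  ultimately show ?thesis unfolding Let_def using pivots by blast
qed

section \<open>The space h_{i,alpha}\<close>

lemma ZGC_sym: "x \<in> ZGC p E colr \<Longrightarrow> sym_mat p x"
  unfolding ZGC_def by simp

lemma cBC_space_Z2:
  "cBC_space ns Z \<Longrightarrow> x \<in> Z \<Longrightarrow> y \<in> Z \<Longrightarrow> block_diag ns x * block_diag ns y \<in> Z"
  unfolding cBC_space_def Let_def by blast

lemma block_diag_Mspace:
  assumes "x \<in> Mspace ns i Z" "x \<in> carrier_mat (sum_list ns) (sum_list ns)"
  shows "block_diag ns x = x"
  using assms unfolding Mspace_def block_diag_def by (intro eq_matI) auto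

lemma Mspace_mult_commute:
  assumes cbc: "cBC_space ns Z" and sym: "\<forall>z\<in>Z. sym_mat (sum_list ns) z"
    and x: "x \<in> Mspace ns i Z" and y: "y \<in> Mspace ns i Z"
  shows "x * y = y * x"
proof -
  have Z: "x \<in> Z" "y \<in> Z" using x y unfolding Mspace_def by auto
  then have xs: "sym_mat (sum_list ns) x" and ys: "sym_mat (sum_list ns) y" using sym by auto
  have "x * y \<in> Z"
    using cBC_space_Z2[OF cbc Z] block_diag_Mspace[OF x] block_diag_Mspace[OF y] xs ys
    unfolding sym_mat_def by simp
  then have "transpose_mat (x * y) = x * y" using sym unfolding sym_mat_def by auto
  moreover have "transpose_mat (x * y) = y * x"
    using xs ys transpose_mult[of x "sum_list ns" "sum_list ns" y "sum_list ns"]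
    unfolding sym_mat_def by simp
  ultimately show ?thesis by simp
qed

lemma jordan_frame_Mspace: "jordan_frame ns i Z cs d \<Longrightarrow> \<beta> < d \<Longrightarrow> cs \<beta> \<in> Mspace ns i Z"
  unfolding jordan_frame_def orth_idem_family_def by auto

lemma jordan_frame_mult:
  "jordan_frame ns i Z cs d \<Longrightarrow> \<beta> < d \<Longrightarrow> \<gamma> < d \<Longrightarrow>
    cs \<beta> * cs \<gamma> = (if \<beta> = \<gamma> then cs \<beta> else 0\<^sub>m (sum_list ns) (sum_list ns))"
  unfolding jordan_frame_def orth_idem_family_def by auto

lemma msum_mult_zero:
  assumes "\<And>\<beta>. \<beta> \<in> S \<Longrightarrow> cs \<beta> * C = 0\<^sub>m p p" "\<And>\<beta>. \<beta> \<in> S \<Longrightarrow> cs \<beta> \<in> carrier_mat p p"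
    and C: "C \<in> carrier_mat p p"
  shows "msum p cs S * C = 0\<^sub>m p p"
proof (rule eq_matI)
  fix a b assume "a < dim_row (0\<^sub>m p p :: real mat)" "b < dim_col (0\<^sub>m p p :: real mat)"
  then have ab: "a < p" "b < p" by auto
  have "(msum p cs S * C) $$ (a,b) = (\<Sum>\<beta>\<in>S. \<Sum>k<p. cs \<beta> $$ (a,k) * C $$ (k,b))"
    using ab C unfolding msum_def
    by (simp add: scalar_prod_def atLeast0LessThan sum_distrib_right sum.swap[where A="{..<p}"])
  also have "\<dots> = (\<Sum>\<beta>\<in>S. (cs \<beta> * C) $$ (a,b))"
  proof (rule sum.cong[OF refl])
    fix \<beta> assume "\<beta> \<in> S"
    then show "(\<Sum>k<p. cs \<beta> $$ (a,k) * C $$ (k,b)) = (cs \<beta> * C) $$ (a,b)"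
      using assms(2)[OF \<open>\<beta> \<in> S\<close>] ab C by (simp add: scalar_prod_def atLeast0LessThan)
  qed
  also have "\<dots> = 0" using assms(1) ab by simp
  finally show "(msum p cs S * C) $$ (a,b) = 0\<^sub>m p p $$ (a,b)" using ab by simp
qed (use C in \<open>auto simp: msum_def\<close>)

(* M_i(Z) is commutative by (Z2), so c_{>alpha} x c_alpha = c_{>alpha} c_alpha x = 0. *)
lemma msum_greater_mult_Mspace_mult_zero:
  assumes cbc: "cBC_space ns Z" and sym: "\<forall>z\<in>Z. sym_mat (sum_list ns) z"
    and frame: "jordan_frame ns i Z cs d" and \<alpha>: "\<alpha> < d" and x: "x \<in> Mspace ns i Z"
  shows "msum (sum_list ns) cs {\<alpha><..<d} * x * cs \<alpha> = 0\<^sub>m (sum_list ns) (sum_list ns)"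
proof -
  let ?p = "sum_list ns" and ?c = "cs \<alpha>" and ?s = "msum (sum_list ns) cs {\<alpha><..<d}"
  have cs: "cs \<beta> \<in> Mspace ns i Z" "cs \<beta> \<in> carrier_mat ?p ?p" if "\<beta> < d" for \<beta>
    using jordan_frame_Mspace[OF frame that] sym unfolding Mspace_def sym_mat_def by auto
  have s: "?s \<in> carrier_mat ?p ?p" unfolding msum_def by simp
  have xC: "x \<in> carrier_mat ?p ?p" using x sym unfolding Mspace_def sym_mat_def by auto
  have sc: "?s * ?c = 0\<^sub>m ?p ?p"
    using jordan_frame_mult[OF frame _ \<alpha>] cs \<alpha> by (intro msum_mult_zero) auto
  have "?s * x * ?c = ?s * (?c * x)"
    using Mspace_mult_commute[OF cbc sym x cs(1)[OF \<alpha>]] xC s cs(2)[OF \<alpha>] by simp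
  also have "\<dots> = 0\<^sub>m ?p ?p"
    using sc xC s cs(2)[OF \<alpha>] by (simp add: assoc_mult_mat[symmetric, of ?s ?p ?p ?c ?p x ?p])
  finally show ?thesis .
qed

lemma hspace_eq_mats_span:
  assumes cbc: "cBC_space ns Z" and sym: "\<forall>z\<in>Z. sym_mat (sum_list ns) z"
    and frame: "jordan_frame ns i Z cs d" and \<alpha>: "\<alpha> < d"
    and L: "is_mat_basis (sum_list ns) (Lspace ns i Z) Bs"
  shows "hspace ns i Z cs d \<alpha> = mats_span (sum_list ns) (map (\<lambda>B. B * cs \<alpha>) Bs)"
proof -
  let ?p = "sum_list ns" and ?c = "cs \<alpha>" and ?s = "msum (sum_list ns) cs {\<alpha><..<d}"
  have c: "?c \<in> Mspace ns i Z" "?c \<in> carrier_mat ?p ?p"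
    using jordan_frame_Mspace[OF frame \<alpha>] sym unfolding Mspace_def sym_mat_def by auto
  have BC: "set Bs \<subseteq> carrier_mat ?p ?p" and Lspan: "Lspace ns i Z = mats_span ?p Bs"
    using L unfolding is_mat_basis_def by auto
  have key: "?s * x * ?c + y * ?c = y * ?c" if "x \<in> Mspace ns i Z" "y \<in> Lspace ns i Z" for x y
  proof -
    have "y \<in> carrier_mat ?p ?p" using that(2) Lspan mats_span_carrier by blast
    then show ?thesis
      using msum_greater_mult_Mspace_mult_zero[OF cbc sym frame \<alpha> that(1)] mult_carrier_mat[OF _ c(2)]
      by simp
  qed
  have "hspace ns i Z cs d \<alpha> = {y * ?c | y. y \<in> Lspace ns i Z}"
  proof (intro equalityI subsetI)
    fix X assume "X \<in> hspace ns i Z cs d \<alpha>"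
    then obtain x y where "X = ?s * x * ?c + y * ?c" "x \<in> Mspace ns i Z" "y \<in> Lspace ns i Z"
      unfolding hspace_def by blast
    then show "X \<in> {y * ?c | y. y \<in> Lspace ns i Z}" using key by auto
  next
    fix X assume "X \<in> {y * ?c | y. y \<in> Lspace ns i Z}"
    then obtain y where y: "X = ?s * ?c * ?c + y * ?c" "y \<in> Lspace ns i Z"
      using key[OF c(1)] by auto
    then show "X \<in> hspace ns i Z cs d \<alpha>" unfolding hspace_def using c(1) by blast
  qed
  also have "\<dots> = {mat_lincomb ?p w Bs * ?c | w. True}"
    unfolding Lspan mats_span_def by blast
  also have "\<dots> = mats_span ?p (map (\<lambda>B. B * ?c) Bs)"
    unfolding mats_span_def mat_lincomb_mult_right[OF BC c(2)] ..
  finally show ?thesis .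
qed

theorem theorem4p16:
  fixes p :: nat and ns :: "nat list" and E :: "nat set set" and colr :: "nat set \<Rightarrow> 'c"
    and i d \<alpha> :: nat and cs :: "nat \<Rightarrow> real mat"
    and fs Bs :: "real mat list" and A :: "real mat"
  assumes graph: "simple_graph_on p E"
    and colours: "\<forall>v<p. \<forall>e\<in>E. colr {v} \<noteq> colr e"
    and part: "ordered_partition p ns"
    and cbc: "cBC_space ns (ZGC p E colr)"
    and i_lt: "i < length ns"
    and frame: "jordan_frame ns i (ZGC p E colr) cs d"
    and alpha_lt: "\<alpha> < d"
    and onb: "is_mat_basis p (hspace ns i (ZGC p E colr) cs d \<alpha>) fs" "orthonormal_mats fs"
    and Lbasis: "is_mat_basis p (Lspace ns i (ZGC p E colr)) Bs"
    and A_pd: "posdef_mat p A"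
  shows
   "let Z = ZGC p E colr;
        c = cs \<alpha>;
        \<mu> = real (mat_rank p c);
        et = (1 / sqrt \<mu>) \<cdot>\<^sub>m c;
        h = hspace ns i Z cs d \<alpha>;
        m = mat_dim p h;
        q = length Bs;
        U = (\<lambda>t. Bs ! t * c);
        G = gram_mat (map U [0..<q]);
        \<psi> = psi_mat A fs;
        \<phi> = phi_mat A et fs;
        lam = mtrace (A * c) / \<mu>
    in m = mat_rank q G \<and>
       (0 < m \<longrightarrow>
         (\<forall>ts. length ts = m \<and> set ts \<subseteq> {..<q} \<and>
                det (mat m m (\<lambda>(k,l). G $$ (ts ! k, ts ! l))) \<noteq> 0 \<longrightarrow>
           (let Gt = mat m m (\<lambda>(k,l). G $$ (ts ! k, ts ! l));
                U' = map U ts;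
                \<Psi> = psi_mat A U';
                V = mat 1 m (\<lambda>(_,k). mtrace (A * c * transpose_mat (U' ! k)) / sqrt \<mu>)
            in is_mat_basis p h U' \<and>
               posdef_mat m \<Psi> \<and>
               det \<psi> = det \<Psi> / det Gt \<and>
               det \<phi> / det \<psi> = lam - (V * the (mat_inverse \<Psi>) * transpose_mat V) $$ (0,0)))) \<and>
       (m = 0 \<longrightarrow> det \<phi> / det \<psi> = lam)"
proof -
  let ?Z = "ZGC p E colr" and ?c = "cs \<alpha>" and ?q = "length Bs" and ?U = "\<lambda>t. Bs ! t * cs \<alpha>"
  have p: "sum_list ns = p" using part unfolding ordered_partition_def by simp
  have sym: "\<forall>z\<in>?Z. sym_mat (sum_list ns) z" using p ZGC_sym by blast
  have c: "?c \<in> carrier_mat p p" "?c * ?c = ?c"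
    using jordan_frame_Mspace[OF frame alpha_lt] jordan_frame_mult[OF frame alpha_lt alpha_lt] sym p
    unfolding Mspace_def sym_mat_def by auto
  have fs: "set fs \<subseteq> carrier_mat p p" "mats_lin_indep p fs"
    and h: "hspace ns i ?Z cs d \<alpha> = mats_span p fs"
    using onb(1) unfolding is_mat_basis_def by auto
  have dim: "mat_dim p (mats_span p fs) = length fs" using mat_dim_eq[OF onb(1)] h by simp
  have "map ?U [0..<?q] = map (\<lambda>B. B * ?c) Bs" by (rule nth_equalityI) auto
  then have U: "mats_span p (map ?U [0..<?q]) = mats_span p fs"
    using hspace_eq_mats_span[OF cbc sym frame alpha_lt] Lbasis p h by simp
  have "B * ?c \<in> carrier_mat p p" if "B \<in> set Bs" for B
    using that Lbasis c(1) mult_carrier_mat unfolding is_mat_basis_def by blast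
  then have UC: "set (map ?U [0..<?q]) \<subseteq> carrier_mat p p" by auto
  show ?thesis
    using spanning_family_pivots[OF A_pd fs onb(2) UC U c of_nat_0_le_iff]
    unfolding Let_def h dim .
qed

end
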